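(* Let $x\in R$ be a nonzero left integral of $R$, and assume the space of left integrals of $R$ is $kx$ and that there is a linear functional $\alpha_R:R\to k$ with $xr=\alpha_R(r)x$ for all $r\in R$. Let $\Lambda$ be a nonzero left integral of $H$ and $\alpha_H\in G(H^* )$ its distinguished grouplike, $\Lambda h=\alpha_H(h)\Lambda$. Then: (1) $j(\Lambda)x$ is a nonzero left integral of $A$; (2) there is $\gamma\in G(H^* )$ such that $h\cdot x=\gamma(h)x$ for all $h\in H$; (3) the distinguished grouplike element $\alpha_A\in G(A^* )$ (defined by $ta=\alpha_A(a)t$ for a nonzero left integral $t$ of $A$ and all $a\in A$) satisfies $\alpha_A(rj(h))=\alpha_R(r)\,(\gamma^{-1}\alpha_H)(h)$ for all $r\in R$, $h\in H$, i.e. $\alpha_A=\alpha_R\#\gamma^{-1}\alpha_H$.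
   Context: Let $A,H$ be finite-dimensional Hopf algebras over a field $k$ with Hopf algebra maps $p:A\to H$, $j:H\to A$ such that $pj=\mathrm{id}_H$. Let $R=A^{\mathrm{co}H}=\{a\in A:(\mathrm{id}\otimes p)\Delta(a)=a\otimes1\}$; it is a subalgebra of $A$ and a braided Hopf algebra in the category of Yetter–Drinfeld modules over $H$, with $H$-action $h\cdot r=j(h_1)rj(S h_2)$, coaction $(p\otimes\mathrm{id})\Delta$ and comultiplication $\Delta_R(r)=r_1jpS(r_2)\otimes r_3$. The multiplication map $R\otimes H\to A$, $r\otimes h\mapsto rj(h)$, is bijective (so $A\cong R\#H$). A left integral of $R$ is $x\in R$ with $rx=\epsilon(r)x$ for all $r\in R$; a left integral of a Hopf algebra $B$ is $t\in B$ with $bt=\epsilon(b)t$ for all $b\in B$. $G(H^* )$ denotes the algebra maps $H\to k$. *)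

theory Defs
  imports Main
begin

text \<open>
Finite-dimensional Hopf algebras over a field 'k, presented by a finite basis
indexed by a finite type 'i and structure constants.  An element is a coefficient
vector 'i => 'k; the tensor square is ('i * 'i) => 'k; linear functionals are
dual coefficient vectors 'i => 'k.
  e_i e_j = sum_l hm i j l e_l,   1 = sum_i hu i e_i,
  Delta e_i = sum_(j,l) hc i j l e_j (x) e_l,   eps e_i = he i,
  S e_i = sum_j hs i j e_j.
\<close>

record ('i, 'k) hopf_data =
  hm :: "'i \<Rightarrow> 'i \<Rightarrow> 'i \<Rightarrow> 'k"
  hu :: "'i \<Rightarrow> 'k"
  hc :: "'i \<Rightarrow> 'i \<Rightarrow> 'i \<Rightarrow> 'k"
  he :: "'i \<Rightarrow> 'k"
  hs :: "'i \<Rightarrow> 'i \<Rightarrow> 'k"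

definition vzero :: "'i \<Rightarrow> 'k::field" where
  "vzero = (\<lambda>_. 0)"

definition vscale :: "'k::field \<Rightarrow> ('i \<Rightarrow> 'k) \<Rightarrow> ('i \<Rightarrow> 'k)" where
  "vscale c x = (\<lambda>i. c * x i)"

definition ev :: "'i \<Rightarrow> 'i \<Rightarrow> 'k::field" where
  "ev i = (\<lambda>j. if j = i then 1 else 0)"

definition hmul :: "('i::finite, 'k::field) hopf_data \<Rightarrow> ('i \<Rightarrow> 'k) \<Rightarrow> ('i \<Rightarrow> 'k) \<Rightarrow> ('i \<Rightarrow> 'k)" where
  "hmul H x y = (\<lambda>l. \<Sum>i\<in>UNIV. \<Sum>j\<in>UNIV. x i * y j * hm H i j l)"

definition hone :: "('i::finite, 'k::field) hopf_data \<Rightarrow> ('i \<Rightarrow> 'k)" where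
  "hone H = hu H"

definition hcomul :: "('i::finite, 'k::field) hopf_data \<Rightarrow> ('i \<Rightarrow> 'k) \<Rightarrow> ('i \<times> 'i \<Rightarrow> 'k)" where
  "hcomul H x = (\<lambda>(j, l). \<Sum>i\<in>UNIV. x i * hc H i j l)"

definition hcounit :: "('i::finite, 'k::field) hopf_data \<Rightarrow> ('i \<Rightarrow> 'k) \<Rightarrow> 'k" where
  "hcounit H x = (\<Sum>i\<in>UNIV. x i * he H i)"

definition hanti :: "('i::finite, 'k::field) hopf_data \<Rightarrow> ('i \<Rightarrow> 'k) \<Rightarrow> ('i \<Rightarrow> 'k)" where
  "hanti H x = (\<lambda>j. \<Sum>i\<in>UNIV. x i * hs H i j)"

text \<open>Multiplication in the tensor algebra H (x) H.\<close>
definition hmul2 :: "('i::finite, 'k::field) hopf_data \<Rightarrow> ('i \<times> 'i \<Rightarrow> 'k) \<Rightarrow> ('i \<times> 'i \<Rightarrow> 'k) \<Rightarrow> ('i \<times> 'i \<Rightarrow> 'k)" where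
  "hmul2 H t s = (\<lambda>(l1, l2). \<Sum>p\<in>UNIV. \<Sum>q\<in>UNIV.
      t p * s q * hm H (fst p) (fst q) l1 * hm H (snd p) (snd q) l2)"

text \<open>(Delta (x) id) and (id (x) Delta) on the tensor square.\<close>
definition comul_left :: "('i::finite, 'k::field) hopf_data \<Rightarrow> ('i \<times> 'i \<Rightarrow> 'k) \<Rightarrow> ('i \<times> 'i \<times> 'i \<Rightarrow> 'k)" where
  "comul_left H t = (\<lambda>(a, b, c). \<Sum>p\<in>UNIV. t (p, c) * hcomul H (ev p) (a, b))"

definition comul_right :: "('i::finite, 'k::field) hopf_data \<Rightarrow> ('i \<times> 'i \<Rightarrow> 'k) \<Rightarrow> ('i \<times> 'i \<times> 'i \<Rightarrow> 'k)" where
  "comul_right H t = (\<lambda>(a, b, c). \<Sum>q\<in>UNIV. t (a, q) * hcomul H (ev q) (b, c))"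

definition is_hopf :: "('i::finite, 'k::field) hopf_data \<Rightarrow> bool" where
  "is_hopf H \<longleftrightarrow>
     (\<forall>x y z. hmul H (hmul H x y) z = hmul H x (hmul H y z)) \<and>
     (\<forall>x. hmul H (hone H) x = x \<and> hmul H x (hone H) = x) \<and>
     (\<forall>x. comul_left H (hcomul H x) = comul_right H (hcomul H x)) \<and>
     (\<forall>x. (\<lambda>l. \<Sum>j\<in>UNIV. hcounit H (ev j) * hcomul H x (j, l)) = x) \<and>
     (\<forall>x. (\<lambda>j. \<Sum>l\<in>UNIV. hcomul H x (j, l) * hcounit H (ev l)) = x) \<and>
     (\<forall>x y. hcomul H (hmul H x y) = hmul2 H (hcomul H x) (hcomul H y)) \<and>
     hcomul H (hone H) = (\<lambda>(a, b). hone H a * hone H b) \<and>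
     (\<forall>x y. hcounit H (hmul H x y) = hcounit H x * hcounit H y) \<and>
     hcounit H (hone H) = 1 \<and>
     (\<forall>x. (\<lambda>m. \<Sum>p\<in>UNIV. hcomul H x p * hmul H (hanti H (ev (fst p))) (ev (snd p)) m)
            = vscale (hcounit H x) (hone H)) \<and>
     (\<forall>x. (\<lambda>m. \<Sum>p\<in>UNIV. hcomul H x p * hmul H (ev (fst p)) (hanti H (ev (snd p))) m)
            = vscale (hcounit H x) (hone H))"

text \<open>Linear maps given by matrices: f(e_i) = sum_j P i j e_j.\<close>
definition lin :: "('i::finite \<Rightarrow> 'j \<Rightarrow> 'k::field) \<Rightarrow> ('i \<Rightarrow> 'k) \<Rightarrow> ('j \<Rightarrow> 'k)" where
  "lin P x = (\<lambda>j. \<Sum>i\<in>UNIV. x i * P i j)"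

definition lin2 :: "('i::finite \<Rightarrow> 'j \<Rightarrow> 'k::field) \<Rightarrow> ('i \<times> 'i \<Rightarrow> 'k) \<Rightarrow> ('j \<times> 'j \<Rightarrow> 'k)" where
  "lin2 P t = (\<lambda>(a, b). \<Sum>p\<in>UNIV. t p * P (fst p) a * P (snd p) b)"

definition is_hopf_map ::
  "('i::finite, 'k::field) hopf_data \<Rightarrow> ('j::finite, 'k) hopf_data \<Rightarrow> ('i \<Rightarrow> 'j \<Rightarrow> 'k) \<Rightarrow> bool" where
  "is_hopf_map A H P \<longleftrightarrow>
     (\<forall>x y. lin P (hmul A x y) = hmul H (lin P x) (lin P y)) \<and>
     lin P (hone A) = hone H \<and>
     (\<forall>x. hcomul H (lin P x) = lin2 P (hcomul A x)) \<and>
     (\<forall>x. hcounit H (lin P x) = hcounit A x)"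

text \<open>Coinvariants R = A^{co H} = { a. (id (x) p) Delta a = a (x) 1 }.\<close>
definition coinv ::
  "('a::finite, 'k::field) hopf_data \<Rightarrow> ('h::finite, 'k) hopf_data \<Rightarrow> ('a \<Rightarrow> 'h \<Rightarrow> 'k) \<Rightarrow> ('a \<Rightarrow> 'k) set" where
  "coinv A H P = {a. (\<lambda>(i, b). \<Sum>l\<in>UNIV. hcomul A a (i, l) * P l b) = (\<lambda>(i, b). a i * hone H b)}"

definition is_left_integral_in ::
  "('a::finite, 'k::field) hopf_data \<Rightarrow> ('a \<Rightarrow> 'k) set \<Rightarrow> ('a \<Rightarrow> 'k) \<Rightarrow> bool" where
  "is_left_integral_in A S x \<longleftrightarrow> x \<in> S \<and> (\<forall>r\<in>S. hmul A r x = vscale (hcounit A r) x)"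

definition is_left_integral :: "('a::finite, 'k::field) hopf_data \<Rightarrow> ('a \<Rightarrow> 'k) \<Rightarrow> bool" where
  "is_left_integral A t \<longleftrightarrow> is_left_integral_in A UNIV t"

text \<open>H-action on R: h . r = j(h_1) r j(S h_2).\<close>
definition hact ::
  "('a::finite, 'k::field) hopf_data \<Rightarrow> ('h::finite, 'k) hopf_data \<Rightarrow> ('h \<Rightarrow> 'a \<Rightarrow> 'k)
     \<Rightarrow> ('h \<Rightarrow> 'k) \<Rightarrow> ('a \<Rightarrow> 'k) \<Rightarrow> ('a \<Rightarrow> 'k)" where
  "hact A H J h r = (\<lambda>m. \<Sum>p\<in>UNIV. hcomul H h p *
      hmul A (hmul A (lin J (ev (fst p))) r) (lin J (hanti H (ev (snd p)))) m)"

definition fapp :: "('i::finite \<Rightarrow> 'k::field) \<Rightarrow> ('i \<Rightarrow> 'k) \<Rightarrow> 'k" where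
  "fapp \<phi> x = (\<Sum>i\<in>UNIV. \<phi> i * x i)"

text \<open>G(H^*): algebra maps H -> k.\<close>
definition grouplike_dual :: "('i::finite, 'k::field) hopf_data \<Rightarrow> ('i \<Rightarrow> 'k) \<Rightarrow> bool" where
  "grouplike_dual H \<phi> \<longleftrightarrow>
     (\<forall>x y. fapp \<phi> (hmul H x y) = fapp \<phi> x * fapp \<phi> y) \<and> fapp \<phi> (hone H) = 1"

text \<open>Convolution product in H^*, its unit is the counit, and the inverse.\<close>
definition conv :: "('i::finite, 'k::field) hopf_data \<Rightarrow> ('i \<Rightarrow> 'k) \<Rightarrow> ('i \<Rightarrow> 'k) \<Rightarrow> ('i \<Rightarrow> 'k)" where
  "conv H \<phi> \<psi> = (\<lambda>i. \<Sum>p\<in>UNIV. hc H i (fst p) (snd p) * \<phi> (fst p) * \<psi> (snd p))"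

definition conv_inv :: "('i::finite, 'k::field) hopf_data \<Rightarrow> ('i \<Rightarrow> 'k) \<Rightarrow> ('i \<Rightarrow> 'k)" where
  "conv_inv H \<phi> = (THE \<psi>. conv H \<psi> \<phi> = he H \<and> conv H \<phi> \<psi> = he H)"

end

theory Submission
  imports Defs "HOL-Library.Function_Algebras" "HOL.Vector_Spaces"
begin

text \<open>
  Elements are coefficient vectors on a finite basis, and all
  Hopf-algebraic reasoning is done with Sweedler sums \<open>sw H x F = \<Sum> F(x\<^sub>1, x\<^sub>2)\<close>, for which
  the axioms become rewrite rules (coassociativity, counit, antipode, multiplicativity of
  \<open>\<Delta>\<close>, transport along Hopf maps, coinvariance).

  General Hopf algebra facts come first: \<open>S\<close> reverses products and coproducts; for a nonzero
  left integral \<open>t\<close> the Frobenius map \<open>\<phi> \<mapsto> \<Sum> \<phi>(S t\<^sub>2) t\<^sub>1\<close> is injective, hence bijective, so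
  left integrals are unique up to scalars and \<open>S\<close> is bijective.  For the biproduct we show that
  the adjoint action \<open>h \<cdot> r = j(h\<^sub>1) r j(S h\<^sub>2)\<close> preserves \<open>R\<close>, that \<open>r j(h) x = \<epsilon>(r) j(h) x\<close>
  for \<open>r \<in> R\<close>, and that \<open>a\<close> acts on \<open>j(\<Lambda>) x\<close> as \<open>E(a) = \<Sum> a\<^sub>1 j(p(S a\<^sub>2)) \<in> R\<close>; this gives
  part (1).  Each \<open>h \<cdot> x\<close> is a left integral of \<open>R\<close>, so \<open>h \<cdot> x = \<gamma>(h) x\<close> (part (2)); then
  \<open>j(h) x = x j(\<Sum> \<gamma>(h\<^sub>1) h\<^sub>2)\<close> shows \<open>j(\<Lambda>) x \<noteq> 0\<close>.  Finally, writing
  \<open>j(\<Lambda>) x j(h) = \<beta>(h) j(\<Lambda>) x\<close>, expanding \<open>j(\<Lambda>) j(h) x\<close> in two ways yields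
  \<open>\<gamma> * \<beta> = \<alpha>\<^sub>H\<close>, i.e. \<open>\<beta> = \<gamma>\<^sup>-\<^sup>1 \<alpha>\<^sub>H\<close>, which is part (3).
\<close>

section \<open>Coordinate vectors and linear functionals\<close>

lemma sum_fun_app: "(\<Sum>i\<in>A. f i) x = (\<Sum>i\<in>A. f i x)"
  by (induct A rule: infinite_finite_induct) auto

lemma sum_pair: "(\<Sum>p\<in>(UNIV::('a::finite\<times>'b::finite) set). f p) = (\<Sum>a\<in>UNIV. \<Sum>b\<in>UNIV. f (a,b))"
  by (simp only: sum.cartesian_product UNIV_Times_UNIV case_prod_eta)

lemma sum_rot3: "(\<Sum>a\<in>A. \<Sum>b\<in>B. \<Sum>c\<in>C. f a b c) = (\<Sum>b\<in>B. \<Sum>c\<in>C. \<Sum>a\<in>A. f a b c)"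
  by (subst sum.swap) (rule sum.cong[OF refl], rule sum.swap)

lemma sum_rot4:
  "(\<Sum>a\<in>A. \<Sum>b\<in>B. \<Sum>c\<in>C. \<Sum>d\<in>D. f a b c d) = (\<Sum>b\<in>B. \<Sum>c\<in>C. \<Sum>d\<in>D. \<Sum>a\<in>A. f a b c d)"
  by (subst sum.swap) (rule sum.cong[OF refl], rule sum_rot3)

lemma vscale_apply[simp]: "vscale c x i = c * x i"
  by (simp add: vscale_def)

lemma vzero_eq: "vzero = 0"
  by (simp add: vzero_def zero_fun_def)

lemma sum_ev_left[simp]: "(\<Sum>j\<in>(UNIV::'i::finite set). ev i j * f j) = (f i :: 'k::field)"
  by (simp add: ev_def flip: of_bool_def)

lemma sum_ev_right[simp]: "(\<Sum>j\<in>(UNIV::'i::finite set). f j * ev i j) = (f i :: 'k::field)"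
  by (simp add: ev_def flip: of_bool_def)

lemma sum_ev_left'[simp]: "(\<Sum>j\<in>(UNIV::'i::finite set). ev j i * f j) = (f i :: 'k::field)"
  by (simp add: ev_def flip: of_bool_def)

lemma sum_ev_right'[simp]: "(\<Sum>j\<in>(UNIV::'i::finite set). f j * ev j i) = (f i :: 'k::field)"
  by (simp add: ev_def flip: of_bool_def)

lemma vec_decomp: "(x::'i::finite \<Rightarrow> 'k::field) = (\<Sum>i\<in>UNIV. vscale (x i) (ev i))"
  by (rule ext) (simp add: sum_fun_app)

definition islin :: "(('i::finite \<Rightarrow> 'k::field) \<Rightarrow> 'k) \<Rightarrow> bool" where
  "islin f \<longleftrightarrow> (\<forall>x y. f (x + y) = f x + f y) \<and> (\<forall>c x. f (vscale c x) = c * f x)"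

lemma islinD: assumes "islin f" shows "f (x + y) = f x + f y" "f (vscale c x) = c * f x"
  using assms by (auto simp: islin_def)

lemma islin_zero: assumes "islin f" shows "f 0 = 0"
  using islinD(2)[OF assms, of 0 0] by (simp add: vscale_def zero_fun_def)

lemma islin_sum: assumes "islin f" shows "f (\<Sum>i\<in>A. v i) = (\<Sum>i\<in>A. f (v i))"
proof (induct A rule: infinite_finite_induct)
  case (infinite A)
  then show ?case by (simp only: sum.infinite[OF infinite] islin_zero[OF assms])
next
  case (insert i F)
  then show ?case by (simp only: sum.insert[OF insert(1,2)] islinD(1)[OF assms])
qed (simp only: sum.empty islin_zero[OF assms])

lemma islin_expand: assumes "islin f" shows "f x = (\<Sum>i\<in>UNIV. x i * f (ev i))"
proof -
  have "f x = f (\<Sum>i\<in>UNIV. vscale (x i) (ev i))" by (subst vec_decomp) simp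
  also have "\<dots> = (\<Sum>i\<in>UNIV. x i * f (ev i))"
    by (simp add: islin_sum[OF assms] islinD[OF assms])
  finally show ?thesis .
qed

lemma islin_coord: "islin (\<lambda>x. x i)"
  by (simp add: islin_def)

lemma fapp_add[simp]: "fapp \<phi> (x + y) = fapp \<phi> x + fapp \<phi> y"
  by (simp add: fapp_def algebra_simps sum.distrib)
lemma fapp_scale[simp]: "fapp \<phi> (vscale c x) = c * fapp \<phi> x"
  by (simp add: fapp_def algebra_simps sum_distrib_left)
lemma fapp_add'[simp]: "fapp \<phi> (\<lambda>a. x a + y a) = fapp \<phi> x + fapp \<phi> y"
  by (simp add: fapp_def sum.distrib algebra_simps)
lemma fapp_scale'[simp]: "fapp \<phi> (\<lambda>a. c * x a) = c * fapp \<phi> x"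
  by (simp add: fapp_def sum_distrib_left algebra_simps)
lemma fapp_ev[simp]: "fapp \<phi> (ev i) = \<phi> i"
  by (simp add: fapp_def)

lemma fapp_add_left: "fapp (\<phi> + \<psi>) w = fapp \<phi> w + fapp \<psi> w"
  by (simp add: fapp_def sum.distrib algebra_simps)
lemma fapp_scale_left: "fapp (vscale c \<phi>) w = c * fapp \<phi> w"
  by (simp add: fapp_def sum_distrib_left algebra_simps)

lemma islin_fapp: "islin f \<Longrightarrow> f x = fapp (\<lambda>i. f (ev i)) x"
  by (subst islin_expand) (simp_all add: fapp_def mult.commute)

lemma vec_eq_fapp: "(\<And>h. fapp u h = fapp v h) \<Longrightarrow> u = v"
  by (rule ext) (metis fapp_ev)

lemma vec_eq_zero_fapp: "(\<And>\<phi>. fapp \<phi> h = 0) \<Longrightarrow> h = 0"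
  by (rule ext) (metis fapp_def sum_ev_left zero_fun_def)

lemma functional_eq_zero: "(\<And>b. fapp \<phi> b = 0) \<Longrightarrow> \<phi> = 0"
  by (rule ext) (metis fapp_ev zero_fun_def)

lemma vscale_cancel: assumes "x \<noteq> 0" "vscale c x = vscale d x" shows "c = d"
proof -
  obtain z where "x z \<noteq> 0" using assms(1) by (auto simp: fun_eq_iff)
  moreover have "c * x z = d * x z" using fun_cong[OF assms(2), of z] by simp
  ultimately show ?thesis by simp
qed

lemma linear_multiple:
  fixes f :: "('i::finite \<Rightarrow> 'k::field) \<Rightarrow> ('j \<Rightarrow> 'k)"
  assumes lin: "\<And>z. islin (\<lambda>h. f h z)" and mult: "\<And>h. \<exists>c. f h = vscale c v"
  shows "f h = vscale (fapp (\<lambda>i. SOME c. f (ev i) = vscale c v) h) v"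
proof (rule ext)
  fix z
  have ev: "f (ev i) = vscale (SOME c. f (ev i) = vscale c v) v" for i
    using mult[of "ev i"] by (rule someI_ex)
  have "f h z = (\<Sum>i\<in>UNIV. h i * f (ev i) z)" by (rule islin_expand[OF lin])
  also have "\<dots> = vscale (fapp (\<lambda>i. SOME c. f (ev i) = vscale c v) h) v z"
    by (subst ev) (simp add: fapp_def sum_distrib_left mult_ac)
  finally show "f h z = vscale (fapp (\<lambda>i. SOME c. f (ev i) = vscale c v) h) v z" .
qed

section \<open>Linearity of the structure maps\<close>

context fixes H :: "('i::finite, 'k::field) hopf_data" begin

lemma hmul_add1[simp]: "hmul H (x + y) z = hmul H x z + hmul H y z"
  by (rule ext) (simp add: hmul_def algebra_simps sum.distrib)
lemma hmul_add2[simp]: "hmul H z (x + y) = hmul H z x + hmul H z y"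
  by (rule ext) (simp add: hmul_def algebra_simps sum.distrib)
lemma hmul_scale1[simp]: "hmul H (vscale c x) z = vscale c (hmul H x z)"
  by (rule ext) (simp add: hmul_def algebra_simps sum_distrib_left)
lemma hmul_scale2[simp]: "hmul H z (vscale c x) = vscale c (hmul H z x)"
  by (rule ext) (simp add: hmul_def algebra_simps sum_distrib_left)
lemma hanti_add[simp]: "hanti H (x + y) = hanti H x + hanti H y"
  by (rule ext) (simp add: hanti_def algebra_simps sum.distrib)
lemma hanti_scale[simp]: "hanti H (vscale c x) = vscale c (hanti H x)"
  by (rule ext) (simp add: hanti_def algebra_simps sum_distrib_left)
lemma hcounit_add[simp]: "hcounit H (x + y) = hcounit H x + hcounit H y"
  by (simp add: hcounit_def algebra_simps sum.distrib)
lemma hcounit_scale[simp]: "hcounit H (vscale c x) = c * hcounit H x"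
  by (simp add: hcounit_def algebra_simps sum_distrib_left)
lemma hcomul_add[simp]: "hcomul H (x + y) = hcomul H x + hcomul H y"
  by (rule ext) (simp add: hcomul_def algebra_simps sum.distrib split: prod.splits)
lemma hcomul_scale[simp]: "hcomul H (vscale c x) p = c * hcomul H x p"
  by (simp add: hcomul_def algebra_simps sum_distrib_left split: prod.splits)

lemma hmul_zero1[simp]: "hmul H 0 z = 0"
  by (rule ext) (simp add: hmul_def)

lemma hmul_zero2[simp]: "hmul H z 0 = 0"
  by (rule ext) (simp add: hmul_def)

lemma hmul_ev: "hmul H (ev a) (ev b) = (\<lambda>l. hm H a b l)"
  by (rule ext) (simp add: hmul_def mult.assoc flip: sum_distrib_left)

end

lemma lin_add[simp]: "lin P (x + y) = lin P x + lin P y"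
  by (rule ext) (simp add: lin_def algebra_simps sum.distrib)
lemma lin_scale[simp]: "lin P (vscale c x) = vscale c (lin P x)"
  by (rule ext) (simp add: lin_def algebra_simps sum_distrib_left)
lemma lin_ev: "lin P (ev i) = (\<lambda>j. P i j)"
  by (rule ext) (simp add: lin_def)

lemma vector_space_vscale: "vector_space (vscale :: 'k::field \<Rightarrow> ('i \<Rightarrow> 'k) \<Rightarrow> ('i \<Rightarrow> 'k))"
  by unfold_locales (auto simp: vscale_def fun_eq_iff algebra_simps)

lemma fin_dim_vscale:
  "finite_dimensional_vector_space (vscale :: 'k::field \<Rightarrow> ('i::finite \<Rightarrow> 'k) \<Rightarrow> ('i \<Rightarrow> 'k)) (range ev)"
proof -
  interpret vector_space "vscale :: 'k \<Rightarrow> ('i \<Rightarrow> 'k) \<Rightarrow> ('i \<Rightarrow> 'k)" by (rule vector_space_vscale)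
  have indep: "independent (range (ev :: 'i \<Rightarrow> 'i \<Rightarrow> 'k))"
    unfolding independent_explicit_module
  proof (intro allI impI)
    fix T and u :: "('i \<Rightarrow> 'k) \<Rightarrow> 'k" and v
    assume T: "finite T" "T \<subseteq> range ev" "(\<Sum>w\<in>T. vscale (u w) w) = 0" "v \<in> T"
    then obtain i where v: "v = ev i" by auto
    have others: "u w * w i = 0" if "w \<in> T - {v}" for w
    proof -
      obtain j where "w = ev j" "j \<noteq> i" using \<open>w \<in> T - {v}\<close> T(2) v by auto
      then show ?thesis by (simp add: ev_def)
    qed
    have "0 = (\<Sum>w\<in>T. u w * w i)" using fun_cong[OF T(3), of i] by (simp add: sum_fun_app)
    also have "\<dots> = u v * v i + (\<Sum>w\<in>T - {v}. u w * w i)" by (rule sum.remove[OF T(1) T(4)])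
    also have "\<dots> = u v * v i" using others by (simp add: sum.neutral)
    also have "\<dots> = u v" by (simp add: v ev_def)
    finally show "u v = 0" by simp
  qed
  have "x \<in> span (range ev)" for x :: "'i \<Rightarrow> 'k"
    by (subst vec_decomp) (intro span_sum span_scale span_base, simp)
  then show ?thesis
    by unfold_locales (auto simp: indep)
qed

lemma lin_inj_surj:
  fixes f :: "('i::finite \<Rightarrow> 'k::field) \<Rightarrow> ('i \<Rightarrow> 'k)"
  assumes "\<And>x y. f (x + y) = f x + f y" "\<And>c x. f (vscale c x) = vscale c (f x)" "inj f"
  shows "surj f"
proof -
  interpret finite_dimensional_vector_space "vscale :: 'k \<Rightarrow> ('i \<Rightarrow> 'k) \<Rightarrow> ('i \<Rightarrow> 'k)" "range ev"
    by (rule fin_dim_vscale)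
  have "Vector_Spaces.linear vscale vscale f"
    unfolding linear_iff using vector_space_vscale by (simp add: assms)
  then show ?thesis using linear_inj_imp_surj assms(3) by blast
qed

lemma additive_injI:
  fixes f :: "('i \<Rightarrow> 'k::field) \<Rightarrow> ('j \<Rightarrow> 'k)"
  assumes add: "\<And>x y. f (x + y) = f x + f y" and scale: "\<And>c x. f (vscale c x) = vscale c (f x)"
    and ker: "\<And>x. f x = 0 \<Longrightarrow> x = 0"
  shows "inj f"
proof (rule injI)
  fix x y assume "f x = f y"
  then have "f (x + vscale (-1) y) = 0" by (simp add: add scale fun_eq_iff)
  then have "x + vscale (-1) y = 0" by (rule ker)
  then show "x = y" by (simp add: fun_eq_iff)
qed

section \<open>Sweedler sums\<close>

text \<open>The Sweedler sum \<open>sw H x F\<close> stands for \<open>\<Sum> F(x\<^sub>1, x\<^sub>2)\<close>, i.e. the bilinear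
  expression \<open>F\<close> applied to the coproduct of \<open>x\<close>.\<close>

definition sw :: "('i::finite, 'k::field) hopf_data \<Rightarrow> ('i \<Rightarrow> 'k) \<Rightarrow> (('i \<Rightarrow> 'k) \<Rightarrow> ('i \<Rightarrow> 'k) \<Rightarrow> 'k) \<Rightarrow> 'k" where
  "sw H x F = (\<Sum>p\<in>UNIV. hcomul H x p * F (ev (fst p)) (ev (snd p)))"

lemma sw_add[simp]: "sw H (x + y) F = sw H x F + sw H y F"
  by (simp add: sw_def algebra_simps sum.distrib)
lemma sw_scale[simp]: "sw H (vscale c x) F = c * sw H x F"
  by (simp add: sw_def sum_distrib_left mult.assoc)
lemma sw_plus_fun: "sw H x (\<lambda>a b. F a b + G a b) = sw H x F + sw H x G"
  by (simp add: sw_def algebra_simps sum.distrib)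
lemma sw_cmult: "sw H x (\<lambda>a b. c * F a b) = c * sw H x F"
  unfolding sw_def sum_distrib_left by (simp add: mult.left_commute)
lemma sw_cmult2: "sw H x (\<lambda>a b. F a b * c) = sw H x F * c"
  unfolding sw_def sum_distrib_right by (simp add: mult.assoc)
lemma sw_cong: "(\<And>a b. F a b = G a b) \<Longrightarrow> sw H x F = sw H x G"
  by (simp add: sw_def)
lemma sw_sum_fun: "sw H x (\<lambda>a b. \<Sum>i\<in>I. F i a b) = (\<Sum>i\<in>I. sw H x (F i))"
  by (induct I rule: infinite_finite_induct) (auto simp: sw_plus_fun sw_def)

lemma sw_zero[simp]: "sw H 0 F = 0"
  by (simp add: sw_def hcomul_def)

lemma sw_zero_fun[simp]: "sw H x (\<lambda>a b. 0) = 0"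
  by (simp add: sw_def)

lemma islin_sw: "islin (\<lambda>x. sw H x F)"
  by (simp add: islin_def)

lemma sw_swap: "sw H x (\<lambda>a b. sw H' y (\<lambda>c d. K a b c d)) = sw H' y (\<lambda>c d. sw H x (\<lambda>a b. K a b c d))"
  unfolding sw_def by (simp add: sum_distrib_left sum_distrib_right mult_ac) (rule sum.swap)

lemma sw_vec: assumes "islin f"
  shows "f (\<lambda>z. sw H t (\<lambda>u v. K u v z)) = sw H t (\<lambda>u v. f (K u v))"
proof -
  have "(\<lambda>z. sw H t (\<lambda>u v. K u v z)) = (\<Sum>p\<in>UNIV. vscale (hcomul H t p) (K (ev (fst p)) (ev (snd p))))"
    by (rule ext) (simp add: sw_def sum_fun_app)
  then show ?thesis by (simp add: islin_sum[OF assms] islinD[OF assms] sw_def)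
qed

text \<open>Bilinear forms are the admissible integrands of Sweedler sums.\<close>

definition bilin :: "(('i::finite \<Rightarrow> 'k::field) \<Rightarrow> ('j::finite \<Rightarrow> 'k) \<Rightarrow> 'k) \<Rightarrow> bool" where
  "bilin F \<longleftrightarrow> (\<forall>b. islin (\<lambda>a. F a b)) \<and> (\<forall>a. islin (\<lambda>b. F a b))"

lemma bilinI:
  assumes "\<And>x y b. F (x + y) b = F x b + F y b" "\<And>c x b. F (vscale c x) b = c * F x b"
    "\<And>x y a. F a (x + y) = F a x + F a y" "\<And>c x a. F a (vscale c x) = c * F a x"
  shows "bilin F"
  using assms by (simp add: bilin_def islin_def)

lemma bilinD: assumes "bilin F"
  shows "F (x + y) b = F x b + F y b" "F (vscale c x) b = c * F x b"
    "F a (x' + y') = F a x' + F a y'" "F a (vscale c x') = c * F a x'"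
    "F (x + y) = (\<lambda>b. F x b + F y b)" "F (vscale c x) = (\<lambda>b. c * F x b)"
  using assms by (auto simp: bilin_def islin_def)

lemma bilin_expand1: assumes "bilin F" shows "F x w = (\<Sum>i\<in>UNIV. x i * F (ev i) w)"
  using islin_expand[of "\<lambda>a. F a w" x] assms by (simp add: bilin_def)
lemma bilin_expand2: assumes "bilin F" shows "F w x = (\<Sum>i\<in>UNIV. x i * F w (ev i))"
  using islin_expand[of "\<lambda>a. F w a" x] assms by (simp add: bilin_def)

lemma bilin_coord: "bilin (\<lambda>a b. a i * b j)"
  by (rule bilinI) (simp_all add: algebra_simps)

lemma bilin_lin_ev: assumes "bilin F"
  shows "F (lin P (ev i)) (lin P (ev j)) = (\<Sum>a\<in>UNIV. \<Sum>b\<in>UNIV. P i a * P j b * F (ev a) (ev b))"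
proof -
  have "F (lin P (ev i)) (lin P (ev j)) = (\<Sum>a\<in>UNIV. P i a * (\<Sum>b\<in>UNIV. P j b * F (ev a) (ev b)))"
    by (subst bilin_expand1[OF assms], rule sum.cong[OF refl], subst bilin_expand2[OF assms])
      (simp add: lin_ev)
  then show ?thesis by (simp add: sum_distrib_left mult.assoc)
qed

lemma sw_hmap: assumes hmap: "is_hopf_map A H P" and F: "bilin F"
  shows "sw H (lin P x) F = sw A x (\<lambda>a b. F (lin P a) (lin P b))"
proof -
  have comul: "hcomul H (lin P x) = lin2 P (hcomul A x)"
    using hmap by (simp add: is_hopf_map_def)
  have "sw A x (\<lambda>a b. F (lin P a) (lin P b)) =
      (\<Sum>p\<in>UNIV. \<Sum>a\<in>UNIV. \<Sum>b\<in>UNIV. hcomul A x p * (P (fst p) a * P (snd p) b) * F (ev a) (ev b))"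
    by (simp add: sw_def bilin_lin_ev[OF F] sum_distrib_left mult.assoc)
  also have "\<dots> = (\<Sum>a\<in>UNIV. \<Sum>b\<in>UNIV. \<Sum>p\<in>UNIV. hcomul A x p * (P (fst p) a * P (snd p) b) * F (ev a) (ev b))"
    by (rule sum_rot3)
  also have "\<dots> = sw H (lin P x) F"
    by (simp add: sw_def comul sum_pair lin2_def sum_distrib_right mult.assoc)
  finally show ?thesis by simp
qed

lemma coinv_sw: assumes "r \<in> coinv A H P" "bilin F"
  shows "sw A r (\<lambda>a b. F a (lin P b)) = F r (hone H)"
proof -
  have coinv: "(\<Sum>l\<in>UNIV. hcomul A r (i, l) * P l b) = r i * hone H b" for i b
    using fun_cong[OF assms(1)[unfolded coinv_def, simplified], of "(i, b)"] by simp
  have "sw A r (\<lambda>a b. F a (lin P b)) = (\<Sum>i\<in>UNIV. \<Sum>l\<in>UNIV. \<Sum>b\<in>UNIV. hcomul A r (i,l) * P l b * F (ev i) (ev b))"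
    by (simp add: sw_def sum_pair bilin_expand2[OF assms(2), of _ "lin P _"] lin_ev
        sum_distrib_left mult.assoc)
  also have "\<dots> = (\<Sum>i\<in>UNIV. \<Sum>b\<in>UNIV. \<Sum>l\<in>UNIV. hcomul A r (i,l) * P l b * F (ev i) (ev b))"
    by (rule sum.cong[OF refl], rule sum.swap)
  also have "\<dots> = (\<Sum>i\<in>UNIV. \<Sum>b\<in>UNIV. r i * hone H b * F (ev i) (ev b))"
    by (simp add: sum_distrib_right[symmetric] coinv)
  also have "\<dots> = (\<Sum>i\<in>UNIV. r i * F (ev i) (hone H))"
    by (rule sum.cong[OF refl])
      (simp add: bilin_expand2[OF assms(2), of _ "hone H"] sum_distrib_left mult.assoc)
  also have "\<dots> = F r (hone H)"
    by (rule bilin_expand1[OF assms(2), symmetric])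
  finally show ?thesis .
qed

lemma coinvI: assumes "\<And>F. bilin F \<Longrightarrow> sw A r (\<lambda>a b. F a (lin P b)) = F r (hone H)"
  shows "r \<in> coinv A H P"
proof -
  have "(\<Sum>l\<in>UNIV. hcomul A r (i, l) * P l b) = r i * hone H b" for i b
  proof -
    have "sw A r (\<lambda>u v. u i * lin P v b) = (\<Sum>a\<in>UNIV. ev a i * (\<Sum>l\<in>UNIV. hcomul A r (a, l) * P l b))"
      by (simp add: sw_def sum_pair lin_ev sum_distrib_left mult_ac)
    then have "sw A r (\<lambda>u v. u i * lin P v b) = (\<Sum>l\<in>UNIV. hcomul A r (i, l) * P l b)"
      by simp
    then show ?thesis using assms[OF bilin_coord[of i b]] by simp
  qed
  then show ?thesis by (auto simp: coinv_def)
qed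

section \<open>Hopf algebras in Sweedler notation\<close>

locale hopf_alg =
  fixes H :: "('i::finite, 'k::field) hopf_data"
  assumes hopf: "is_hopf H"
begin

lemma mul_assoc: "hmul H (hmul H x y) z = hmul H x (hmul H y z)"
  using hopf by (simp add: is_hopf_def)
lemma one_left[simp]: "hmul H (hone H) x = x"
  using hopf by (simp add: is_hopf_def)
lemma one_right[simp]: "hmul H x (hone H) = x"
  using hopf by (simp add: is_hopf_def)
lemma counit_mult: "hcounit H (hmul H x y) = hcounit H x * hcounit H y"
  using hopf by (simp add: is_hopf_def)
lemma counit_one[simp]: "hcounit H (hone H) = 1"
  using hopf by (simp add: is_hopf_def)

lemma sw_coassoc:
  "sw H x (\<lambda>a b. sw H a (\<lambda>a1 a2. F a1 a2 b)) = sw H x (\<lambda>a b. sw H b (\<lambda>b1 b2. F a b1 b2))"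
proof -
  have coassoc: "comul_left H (hcomul H x) (a,b,c) = comul_right H (hcomul H x) (a,b,c)" for a b c
    using hopf by (simp add: is_hopf_def)
  let ?F = "\<lambda>a b c. F (ev a) (ev b) (ev c)"
  have "sw H x (\<lambda>a b. sw H a (\<lambda>a1 a2. F a1 a2 b)) =
     (\<Sum>p\<in>UNIV. \<Sum>c\<in>UNIV. \<Sum>a\<in>UNIV. \<Sum>b\<in>UNIV. hcomul H x (p,c) * hcomul H (ev p) (a,b) * ?F a b c)"
    by (simp add: sw_def sum_pair sum_distrib_left mult.assoc)
  also have "\<dots> = (\<Sum>c\<in>UNIV. \<Sum>a\<in>UNIV. \<Sum>b\<in>UNIV. \<Sum>p\<in>UNIV. hcomul H x (p,c) * hcomul H (ev p) (a,b) * ?F a b c)"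
    by (rule sum_rot4)
  also have "\<dots> = (\<Sum>a\<in>UNIV. \<Sum>b\<in>UNIV. \<Sum>c\<in>UNIV. \<Sum>p\<in>UNIV. hcomul H x (p,c) * hcomul H (ev p) (a,b) * ?F a b c)"
    by (rule sum_rot3)
  also have "\<dots> = (\<Sum>a\<in>UNIV. \<Sum>b\<in>UNIV. \<Sum>c\<in>UNIV. comul_right H (hcomul H x) (a,b,c) * ?F a b c)"
    by (simp add: coassoc[symmetric] comul_left_def sum_distrib_right)
  also have "\<dots> = (\<Sum>a\<in>UNIV. \<Sum>q\<in>UNIV. \<Sum>b\<in>UNIV. \<Sum>c\<in>UNIV. hcomul H x (a,q) * hcomul H (ev q) (b,c) * ?F a b c)"
    by (rule sum.cong[OF refl], subst sum_rot3) (simp add: comul_right_def sum_distrib_right)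
  also have "\<dots> = sw H x (\<lambda>a b. sw H b (\<lambda>b1 b2. F a b1 b2))"
    by (simp add: sw_def sum_pair sum_distrib_left mult.assoc)
  finally show ?thesis .
qed

lemma sw_counit_l: assumes "islin G" shows "sw H x (\<lambda>a b. hcounit H a * G b) = G x"
proof -
  have counit: "(\<Sum>j\<in>UNIV. hcounit H (ev j) * hcomul H x (j, l)) = x l" for l
    using hopf unfolding is_hopf_def by (metis (no_types, lifting))
  have "sw H x (\<lambda>a b. hcounit H a * G b) = (\<Sum>j\<in>UNIV. \<Sum>l\<in>UNIV. hcomul H x (j,l) * (hcounit H (ev j) * G (ev l)))"
    by (simp add: sw_def sum_pair)
  also have "\<dots> = (\<Sum>l\<in>UNIV. \<Sum>j\<in>UNIV. hcomul H x (j,l) * (hcounit H (ev j) * G (ev l)))"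
    by (rule sum.swap)
  also have "\<dots> = (\<Sum>l\<in>UNIV. (\<Sum>j\<in>UNIV. hcounit H (ev j) * hcomul H x (j, l)) * G (ev l))"
    by (simp add: sum_distrib_right sum_distrib_left mult_ac)
  also have "\<dots> = G x" by (simp add: counit islin_expand[OF assms, of x])
  finally show ?thesis .
qed

lemma sw_counit_r: assumes "islin G" shows "sw H x (\<lambda>a b. G a * hcounit H b) = G x"
proof -
  have counit: "(\<Sum>l\<in>UNIV. hcomul H x (j, l) * hcounit H (ev l)) = x j" for j
    using hopf unfolding is_hopf_def by (metis (no_types, lifting))
  have "sw H x (\<lambda>a b. G a * hcounit H b) = (\<Sum>j\<in>UNIV. (\<Sum>l\<in>UNIV. hcomul H x (j,l) * hcounit H (ev l)) * G (ev j))"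
    by (simp add: sw_def sum_pair sum_distrib_right sum_distrib_left mult_ac)
  also have "\<dots> = G x" by (simp add: counit islin_expand[OF assms, of x])
  finally show ?thesis .
qed

lemma sw_counit_r': "islin G \<Longrightarrow> sw H x (\<lambda>a b. hcounit H b * G a) = G x"
  using sw_counit_r[of G x] by (simp add: mult.commute)

lemma sw_anti_l: assumes "islin G"
  shows "sw H x (\<lambda>a b. G (hmul H (hanti H a) b)) = hcounit H x * G (hone H)"
proof -
  have anti: "(\<lambda>m. \<Sum>p\<in>UNIV. hcomul H x p * hmul H (hanti H (ev (fst p))) (ev (snd p)) m)
      = vscale (hcounit H x) (hone H)"
    using hopf unfolding is_hopf_def by blast
  have "G (\<lambda>m. sw H x (\<lambda>a b. hmul H (hanti H a) b m)) = sw H x (\<lambda>a b. G (hmul H (hanti H a) b))"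
    by (rule sw_vec[OF assms])
  then show ?thesis using anti by (simp add: sw_def islinD[OF assms])
qed

lemma sw_anti_r: assumes "islin G"
  shows "sw H x (\<lambda>a b. G (hmul H a (hanti H b))) = hcounit H x * G (hone H)"
proof -
  have anti: "(\<lambda>m. \<Sum>p\<in>UNIV. hcomul H x p * hmul H (ev (fst p)) (hanti H (ev (snd p))) m)
      = vscale (hcounit H x) (hone H)"
    using hopf unfolding is_hopf_def by blast
  have "G (\<lambda>m. sw H x (\<lambda>a b. hmul H a (hanti H b) m)) = sw H x (\<lambda>a b. G (hmul H a (hanti H b)))"
    by (rule sw_vec[OF assms])
  then show ?thesis using anti by (simp add: sw_def islinD[OF assms])
qed

lemma sw_one: assumes "bilin F" shows "sw H (hone H) F = F (hone H) (hone H)"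
proof -
  have comul: "hcomul H (hone H) = (\<lambda>(a, b). hone H a * hone H b)"
    using hopf unfolding is_hopf_def by blast
  have "sw H (hone H) F = (\<Sum>a\<in>UNIV. hone H a * (\<Sum>b\<in>UNIV. hone H b * F (ev a) (ev b)))"
    by (simp add: sw_def comul sum_pair sum_distrib_left mult.assoc)
  also have "\<dots> = (\<Sum>a\<in>UNIV. hone H a * F (ev a) (hone H))"
    by (simp add: bilin_expand2[OF assms, of _ "hone H"])
  also have "\<dots> = F (hone H) (hone H)"
    by (simp add: bilin_expand1[OF assms, of "hone H"])
  finally show ?thesis .
qed

lemma sw_mult: assumes "bilin F"
  shows "sw H (hmul H x y) F = sw H x (\<lambda>a b. sw H y (\<lambda>c d. F (hmul H a c) (hmul H b d)))"
proof -
  have comul: "hcomul H (hmul H x y) = hmul2 H (hcomul H x) (hcomul H y)"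
    using hopf unfolding is_hopf_def by blast
  let ?m = "\<lambda>p q l1 l2. hm H (fst p) (fst q) l1 * hm H (snd p) (snd q) l2"
  have expand: "F (hmul H (ev a) (ev c)) (hmul H (ev b) (ev d)) =
      (\<Sum>l1\<in>UNIV. \<Sum>l2\<in>UNIV. hm H a c l1 * hm H b d l2 * F (ev l1) (ev l2))" for a b c d
  proof -
    have "F (hmul H (ev a) (ev c)) (hmul H (ev b) (ev d))
        = (\<Sum>l1\<in>UNIV. hm H a c l1 * (\<Sum>l2\<in>UNIV. hm H b d l2 * F (ev l1) (ev l2)))"
      by (subst bilin_expand1[OF assms], rule sum.cong[OF refl], subst bilin_expand2[OF assms])
        (simp add: hmul_ev)
    then show ?thesis by (simp add: sum_distrib_left mult.assoc)
  qed
  have "sw H x (\<lambda>a b. sw H y (\<lambda>c d. F (hmul H a c) (hmul H b d))) =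
     (\<Sum>p\<in>UNIV. \<Sum>q\<in>UNIV. \<Sum>l1\<in>UNIV. \<Sum>l2\<in>UNIV. hcomul H x p * hcomul H y q * ?m p q l1 l2 * F (ev l1) (ev l2))"
    by (simp add: sw_def expand sum_distrib_left mult.assoc)
  also have "\<dots> = (\<Sum>q\<in>UNIV. \<Sum>l1\<in>UNIV. \<Sum>l2\<in>UNIV. \<Sum>p\<in>UNIV. hcomul H x p * hcomul H y q * ?m p q l1 l2 * F (ev l1) (ev l2))"
    by (rule sum_rot4)
  also have "\<dots> = (\<Sum>l1\<in>UNIV. \<Sum>l2\<in>UNIV. \<Sum>p\<in>UNIV. \<Sum>q\<in>UNIV. hcomul H x p * hcomul H y q * ?m p q l1 l2 * F (ev l1) (ev l2))"
    by (rule sum_rot4)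
  also have "\<dots> = sw H (hmul H x y) F"
    by (simp add: sw_def comul sum_pair hmul2_def sum_distrib_right mult.assoc)
  finally show ?thesis by simp
qed

end

section \<open>Properties of the antipode\<close>

context hopf_alg
begin

lemma anti_one[simp]: "hanti H (hone H) = hone H"
proof (rule ext)
  fix z
  have "sw H (hone H) (\<lambda>a b. hmul H (hanti H a) b z) = hmul H (hanti H (hone H)) (hone H) z"
    by (rule sw_one) (rule bilinI, simp_all)
  moreover have "sw H (hone H) (\<lambda>a b. hmul H (hanti H a) b z) = hone H z"
    using sw_anti_l[OF islin_coord, of "hone H" z] by simp
  ultimately show "hanti H (hone H) z = hone H z" by simp
qed

lemma counit_anti[simp]: "hcounit H (hanti H x) = hcounit H x"
proof -
  have "hcounit H (hanti H x) = sw H x (\<lambda>a b. hcounit H (hanti H a) * hcounit H b)"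
    by (rule sw_counit_r[symmetric]) (simp add: islin_def)
  also have "\<dots> = sw H x (\<lambda>a b. hcounit H (hmul H (hanti H a) b))"
    by (simp add: counit_mult)
  also have "\<dots> = hcounit H x"
    using sw_anti_l[of "hcounit H" x] by (simp add: islin_def)
  finally show ?thesis .
qed

text \<open>The sum \<open>\<Sum> G(S(x\<^sub>1y\<^sub>1) x\<^sub>2y\<^sub>2 S(y\<^sub>3) S(x\<^sub>3))\<close> collapses
  to \<open>G(S(xy))\<close> by cancelling \<open>y\<^sub>2S(y\<^sub>3)\<close> and then \<open>x\<^sub>2S(x\<^sub>3)\<close>, and to \<open>G(S(y)S(x))\<close> by
  cancelling \<open>S((xy)\<^sub>1)(xy)\<^sub>2\<close>.\<close>

definition anti_mult_sum :: "(('i \<Rightarrow> 'k) \<Rightarrow> 'k) \<Rightarrow> ('i \<Rightarrow> 'k) \<Rightarrow> ('i \<Rightarrow> 'k) \<Rightarrow> 'k" where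
  "anti_mult_sum G x y = sw H x (\<lambda>x1 x'. sw H x' (\<lambda>x2 x3. sw H y (\<lambda>y1 y'. sw H y' (\<lambda>y2 y3.
     G (hmul H (hmul H (hmul H (hanti H (hmul H x1 y1)) (hmul H x2 y2)) (hanti H y3)) (hanti H x3))))))"

lemma anti_mult_sum_left: assumes G: "islin G" shows "anti_mult_sum G x y = G (hanti H (hmul H x y))"
proof -
  have cancel_y: "sw H y' (\<lambda>y2 y3. G (hmul H (hmul H (hmul H a (hmul H x2 y2)) (hanti H y3)) b))
      = hcounit H y' * G (hmul H (hmul H a x2) b)" for a b x2 y'
  proof -
    have "sw H y' (\<lambda>y2 y3. (\<lambda>w. G (hmul H (hmul H (hmul H a x2) w) b)) (hmul H y2 (hanti H y3)))
        = hcounit H y' * G (hmul H (hmul H (hmul H a x2) (hone H)) b)"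
      by (rule sw_anti_r) (simp add: islin_def islinD[OF G])
    then show ?thesis by (simp add: mul_assoc)
  qed
  have cancel_x: "sw H x' (\<lambda>x2 x3. G (hmul H (hmul H a x2) (hanti H x3))) = hcounit H x' * G a" for a x'
  proof -
    have "sw H x' (\<lambda>x2 x3. (\<lambda>w. G (hmul H a w)) (hmul H x2 (hanti H x3))) = hcounit H x' * G (hmul H a (hone H))"
      by (rule sw_anti_r) (simp add: islin_def islinD[OF G])
    then show ?thesis by (simp add: mul_assoc)
  qed
  have "anti_mult_sum G x y
      = sw H x (\<lambda>x1 x'. sw H x' (\<lambda>x2 x3. sw H y (\<lambda>y1 y'. hcounit H y' *
          G (hmul H (hmul H (hanti H (hmul H x1 y1)) x2) (hanti H x3)))))"
    by (simp add: anti_mult_sum_def cancel_y)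
  also have "\<dots> = sw H x (\<lambda>x1 x'. sw H x' (\<lambda>x2 x3. G (hmul H (hmul H (hanti H (hmul H x1 y)) x2) (hanti H x3))))"
    by (simp add: sw_counit_r' islin_def islinD[OF G])
  also have "\<dots> = sw H x (\<lambda>x1 x'. hcounit H x' * G (hanti H (hmul H x1 y)))"
    by (simp add: cancel_x)
  also have "\<dots> = G (hanti H (hmul H x y))"
    by (rule sw_counit_r') (simp add: islin_def islinD[OF G])
  finally show ?thesis .
qed

lemma anti_mult_sum_right: assumes G: "islin G" shows "anti_mult_sum G x y = G (hmul H (hanti H y) (hanti H x))"
proof -
  let ?K = "\<lambda>x1 x2 x3 y1 y2 y3.
    G (hmul H (hmul H (hmul H (hanti H (hmul H x1 y1)) (hmul H x2 y2)) (hanti H y3)) (hanti H x3))"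
  have prod: "sw H x12 (\<lambda>x1 x2. sw H y12 (\<lambda>y1 y2. ?K x1 x2 x3 y1 y2 y3))
      = hcounit H x12 * (hcounit H y12 * G (hmul H (hanti H y3) (hanti H x3)))" for x12 y12 x3 y3
  proof -
    have "sw H x12 (\<lambda>x1 x2. sw H y12 (\<lambda>y1 y2. ?K x1 x2 x3 y1 y2 y3))
        = sw H (hmul H x12 y12) (\<lambda>u v. G (hmul H (hmul H (hmul H (hanti H u) v) (hanti H y3)) (hanti H x3)))"
      by (rule sw_mult[symmetric]) (rule bilinI, simp_all add: islinD[OF G])
    also have "\<dots> = hcounit H (hmul H x12 y12) * G (hmul H (hmul H (hone H) (hanti H y3)) (hanti H x3))"
      by (rule sw_anti_l) (simp add: islin_def islinD[OF G])
    finally show ?thesis by (simp add: counit_mult mult.assoc)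
  qed
  have "anti_mult_sum G x y
      = sw H x (\<lambda>x12 x3. sw H x12 (\<lambda>x1 x2. sw H y (\<lambda>y12 y3. sw H y12 (\<lambda>y1 y2. ?K x1 x2 x3 y1 y2 y3))))"
    unfolding anti_mult_sum_def by (simp only: sw_coassoc)
  also have "\<dots> = sw H x (\<lambda>x12 x3. sw H y (\<lambda>y12 y3. sw H x12 (\<lambda>x1 x2. sw H y12 (\<lambda>y1 y2. ?K x1 x2 x3 y1 y2 y3))))"
    by (rule sw_cong, rule sw_swap)
  also have "\<dots> = sw H x (\<lambda>x12 x3. sw H y (\<lambda>y12 y3. hcounit H x12 * (hcounit H y12 * G (hmul H (hanti H y3) (hanti H x3)))))"
    by (simp only: prod)
  also have "\<dots> = G (hmul H (hanti H y) (hanti H x))"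
    by (simp add: sw_cmult sw_counit_l islin_def islinD[OF G])
  finally show ?thesis .
qed

lemma anti_mult: "hanti H (hmul H x y) = hmul H (hanti H y) (hanti H x)"
  by (rule ext) (metis anti_mult_sum_left anti_mult_sum_right islin_coord)

end

context hopf_alg
begin

text \<open>The proof
  evaluates the following sum (\<open>x\<close> split four times) in two ways.\<close>

definition anti_comult_sum :: "(('i \<Rightarrow> 'k) \<Rightarrow> ('i \<Rightarrow> 'k) \<Rightarrow> 'k) \<Rightarrow> ('i \<Rightarrow> 'k) \<Rightarrow> 'k" where
  "anti_comult_sum F x = sw H x (\<lambda>x1 x'. sw H x1 (\<lambda>u v. sw H x' (\<lambda>x2 x3. sw H x2 (\<lambda>c d.
     sw H (hanti H x3) (\<lambda>e f. F (hmul H (hmul H (hanti H v) c) e) (hmul H (hmul H (hanti H u) d) f))))))"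

lemma anti_comult_sum_left: assumes F: "bilin F"
  shows "anti_comult_sum F x = sw H x (\<lambda>a b. F (hanti H b) (hanti H a))"
proof -
  note FD = bilinD[OF F]
  let ?F = "\<lambda>u v w w'. F (hmul H (hanti H v) w) (hmul H (hanti H u) w')"
  have collapse: "sw H x' (\<lambda>x2 x3. sw H x2 (\<lambda>c d. sw H (hanti H x3) (\<lambda>e f. ?F u v (hmul H c e) (hmul H d f))))
      = hcounit H x' * F (hanti H v) (hanti H u)" for u v x'
  proof -
    have "sw H x' (\<lambda>x2 x3. sw H x2 (\<lambda>c d. sw H (hanti H x3) (\<lambda>e f. ?F u v (hmul H c e) (hmul H d f))))
        = sw H x' (\<lambda>x2 x3. (\<lambda>z. sw H z (?F u v)) (hmul H x2 (hanti H x3)))"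
      by (rule sw_cong, rule sw_mult[symmetric]) (rule bilinI, simp_all add: FD)
    also have "\<dots> = hcounit H x' * sw H (hone H) (?F u v)"
      by (rule sw_anti_r) (rule islin_sw)
    also have "sw H (hone H) (?F u v) = F (hanti H v) (hanti H u)"
      by (subst sw_one) (rule bilinI, simp_all add: FD)
    finally show ?thesis .
  qed
  have "anti_comult_sum F x = sw H x (\<lambda>x1 x'. hcounit H x' * sw H x1 (\<lambda>u v. F (hanti H v) (hanti H u)))"
    unfolding anti_comult_sum_def by (simp add: mul_assoc collapse sw_cmult)
  also have "\<dots> = sw H x (\<lambda>a b. F (hanti H b) (hanti H a))"
    by (rule sw_counit_r') (rule islin_sw)
  finally show ?thesis .
qed

lemma anti_comult_sum_right: assumes F: "bilin F"
  shows "anti_comult_sum F x = sw H (hanti H x) F"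
proof -
  note FD = bilinD[OF F]
  let ?O = "\<lambda>u v c d x3. sw H (hanti H x3)
    (\<lambda>e f. F (hmul H (hmul H (hanti H v) c) e) (hmul H (hmul H (hanti H u) d) f))"
  have cancel_v: "sw H vc (\<lambda>v c. ?O u v c d x3) = hcounit H vc * sw H (hanti H x3) (\<lambda>e f. F e (hmul H (hmul H (hanti H u) d) f))"
    for u d vc x3
  proof -
    have "sw H vc (\<lambda>v c. (\<lambda>w. sw H (hanti H x3) (\<lambda>e f. F (hmul H w e) (hmul H (hmul H (hanti H u) d) f))) (hmul H (hanti H v) c))
        = hcounit H vc * sw H (hanti H x3) (\<lambda>e f. F (hmul H (hone H) e) (hmul H (hmul H (hanti H u) d) f))"
      by (rule sw_anti_l) (simp add: islin_def FD sw_plus_fun sw_cmult)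
    then show ?thesis by simp
  qed
  have cancel_u: "sw H x12 (\<lambda>u b. sw H (hanti H x3) (\<lambda>e f. F e (hmul H (hmul H (hanti H u) b) f)))
      = hcounit H x12 * sw H (hanti H x3) F" for x12 x3
  proof -
    have "sw H x12 (\<lambda>u b. (\<lambda>w. sw H (hanti H x3) (\<lambda>e f. F e (hmul H w f))) (hmul H (hanti H u) b))
        = hcounit H x12 * sw H (hanti H x3) (\<lambda>e f. F e (hmul H (hone H) f))"
      by (rule sw_anti_l) (simp add: islin_def FD sw_plus_fun sw_cmult)
    then show ?thesis by simp
  qed
  have "anti_comult_sum F x = sw H x (\<lambda>x1 x'. sw H x' (\<lambda>x2 x3. sw H x1 (\<lambda>u v. sw H x2 (\<lambda>c d. ?O u v c d x3))))"
    unfolding anti_comult_sum_def by (rule sw_cong, rule sw_swap)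
  also have "\<dots> = sw H x (\<lambda>x12 x3. sw H x12 (\<lambda>x1 x2. sw H x1 (\<lambda>u v. sw H x2 (\<lambda>c d. ?O u v c d x3))))"
    by (rule sw_coassoc[symmetric])
  also have "\<dots> = sw H x (\<lambda>x12 x3. sw H x12 (\<lambda>u b. sw H b (\<lambda>v x2. sw H x2 (\<lambda>c d. ?O u v c d x3))))"
    by (rule sw_cong, rule sw_coassoc)
  also have "\<dots> = sw H x (\<lambda>x12 x3. sw H x12 (\<lambda>u b. sw H b (\<lambda>vc d. sw H vc (\<lambda>v c. ?O u v c d x3))))"
    by (rule sw_cong, rule sw_cong, rule sw_coassoc[symmetric])
  also have "\<dots> = sw H x (\<lambda>x12 x3. sw H x12 (\<lambda>u b. sw H b (\<lambda>vc d.
      hcounit H vc * sw H (hanti H x3) (\<lambda>e f. F e (hmul H (hmul H (hanti H u) d) f)))))"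
    by (simp only: cancel_v)
  also have "\<dots> = sw H x (\<lambda>x12 x3. hcounit H x12 * sw H (hanti H x3) F)"
    by (simp add: sw_counit_l islin_def FD sw_plus_fun sw_cmult cancel_u)
  also have "\<dots> = sw H (hanti H x) F"
    by (rule sw_counit_l) (simp add: islin_def)
  finally show ?thesis .
qed

lemma anti_comult: "bilin F \<Longrightarrow> sw H (hanti H x) F = sw H x (\<lambda>a b. F (hanti H b) (hanti H a))"
  using anti_comult_sum_left anti_comult_sum_right by metis

end

section \<open>Left integrals of a finite-dimensional Hopf algebra\<close>

definition frob :: "('i::finite, 'k::field) hopf_data \<Rightarrow> ('i \<Rightarrow> 'k) \<Rightarrow> ('i \<Rightarrow> 'k) \<Rightarrow> ('i \<Rightarrow> 'k)" where
  "frob H t \<phi> = (\<lambda>z. sw H t (\<lambda>a b. fapp \<phi> (hanti H b) * a z))"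

definition rtrans :: "('i::finite, 'k::field) hopf_data \<Rightarrow> ('i \<Rightarrow> 'k) \<Rightarrow> ('i \<Rightarrow> 'k) \<Rightarrow> ('i \<Rightarrow> 'k)" where
  "rtrans H \<phi> b = (\<lambda>i. fapp \<phi> (hmul H (ev i) b))"

lemma fapp_rtrans: "fapp (rtrans H \<phi> b) w = fapp \<phi> (hmul H w b)"
  unfolding rtrans_def by (rule islin_fapp[symmetric]) (simp add: islin_def)

lemma frob_add: "frob H t (\<phi> + \<psi>) = frob H t \<phi> + frob H t \<psi>"
  by (rule ext) (simp add: frob_def fapp_add_left algebra_simps sw_plus_fun)
lemma frob_scale: "frob H t (vscale c \<phi>) = vscale c (frob H t \<phi>)"
  by (rule ext) (simp add: frob_def fapp_scale_left mult.assoc sw_cmult)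

lemma sw_frob: "sw H (frob H t \<chi>) G = sw H t (\<lambda>a c. fapp \<chi> (hanti H c) * sw H a G)"
proof -
  have "sw H (frob H t \<chi>) G = (\<lambda>w. sw H w G) (\<lambda>z. sw H t (\<lambda>u v. vscale (fapp \<chi> (hanti H v)) u z))"
    by (simp add: frob_def)
  also have "\<dots> = sw H t (\<lambda>u v. sw H (vscale (fapp \<chi> (hanti H v)) u) G)"
    by (rule sw_vec) (rule islin_sw)
  finally show ?thesis by simp
qed

locale hopf_left_integral = hopf_alg H for H :: "('i::finite, 'k::field) hopf_data" +
  fixes t :: "'i \<Rightarrow> 'k"
  assumes left_integral: "\<And>a. hmul H a t = vscale (hcounit H a) t"
begin

lemma integral_slide_left: assumes F: "bilin F"
  shows "sw H t (\<lambda>u v. F (hmul H b u) (hanti H v)) = sw H t (\<lambda>u v. F u (hmul H (hanti H v) b))"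
proof -
  note FD = bilinD[OF F]
  let ?G = "\<lambda>c w. sw H t (\<lambda>u v. F (hmul H c u) (hmul H (hanti H v) w))"
  have "sw H t (\<lambda>u v. F u (hmul H (hanti H v) b))
      = sw H b (\<lambda>b1 b2. hcounit H b1 * sw H t (\<lambda>u v. F u (hmul H (hanti H v) b2)))"
    by (rule sw_counit_l[symmetric]) (simp add: islin_def FD sw_plus_fun sw_cmult)
  also have "\<dots> = sw H b (\<lambda>b1 b2. sw H (hmul H b1 t) (\<lambda>u v. F u (hmul H (hanti H v) b2)))"
    by (simp add: left_integral)
  also have "\<dots> = sw H b (\<lambda>b1 b2. sw H b1 (\<lambda>c d. ?G c (hmul H (hanti H d) b2)))"
    by (rule sw_cong, subst sw_mult) (rule bilinI, simp_all add: FD anti_mult mul_assoc)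
  also have "\<dots> = sw H b (\<lambda>c b'. sw H b' (\<lambda>d b2. ?G c (hmul H (hanti H d) b2)))"
    by (rule sw_coassoc)
  also have "\<dots> = sw H b (\<lambda>c b'. hcounit H b' * ?G c (hone H))"
    by (rule sw_cong, rule sw_anti_l) (simp add: islin_def FD sw_plus_fun sw_cmult)
  also have "\<dots> = sw H t (\<lambda>u v. F (hmul H b u) (hanti H v))"
    by (simp, rule sw_counit_r') (simp add: islin_def FD sw_plus_fun sw_cmult)
  finally show ?thesis by simp
qed

lemma integral_slide_right: assumes F: "bilin F"
  shows "sw H t (\<lambda>u v. F u (hmul H a v)) = sw H t (\<lambda>u v. F (hmul H (hanti H a) u) v)"
proof -
  note FD = bilinD[OF F]
  let ?G = "\<lambda>w d. sw H t (\<lambda>u v. F (hmul H w u) (hmul H d v))"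
  have "sw H t (\<lambda>u v. F (hmul H (hanti H a) u) v)
      = sw H a (\<lambda>a1 a2. hcounit H a2 * sw H t (\<lambda>u v. F (hmul H (hanti H a1) u) v))"
    by (rule sw_counit_r'[symmetric]) (simp add: islin_def FD sw_plus_fun sw_cmult)
  also have "\<dots> = sw H a (\<lambda>a1 a2. sw H (hmul H a2 t) (\<lambda>u v. F (hmul H (hanti H a1) u) v))"
    by (simp add: left_integral)
  also have "\<dots> = sw H a (\<lambda>a1 a2. sw H a2 (\<lambda>c d. ?G (hmul H (hanti H a1) c) d))"
    by (rule sw_cong, subst sw_mult) (rule bilinI, simp_all add: FD mul_assoc)
  also have "\<dots> = sw H a (\<lambda>a12 d. sw H a12 (\<lambda>a1 c. ?G (hmul H (hanti H a1) c) d))"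
    by (rule sw_coassoc[symmetric])
  also have "\<dots> = sw H a (\<lambda>a12 d. hcounit H a12 * ?G (hone H) d)"
    by (rule sw_cong, rule sw_anti_l) (simp add: islin_def FD sw_plus_fun sw_cmult)
  also have "\<dots> = sw H t (\<lambda>u v. F u (hmul H a v))"
    by (simp, rule sw_counit_l) (simp add: islin_def FD sw_plus_fun sw_cmult)
  finally show ?thesis by simp
qed

lemma frob_rtrans: "hmul H b (frob H t \<phi>) = frob H t (rtrans H \<phi> b)"
proof (rule ext)
  fix z
  have "hmul H b (frob H t \<phi>) z = (\<lambda>w. hmul H b w z) (\<lambda>z. sw H t (\<lambda>u v. vscale (fapp \<phi> (hanti H v)) u z))"
    by (simp add: frob_def)
  also have "\<dots> = sw H t (\<lambda>u v. (\<lambda>x y. fapp \<phi> y * x z) (hmul H b u) (hanti H v))"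
    by (subst sw_vec) (simp_all add: islin_def mult.commute)
  also have "\<dots> = sw H t (\<lambda>u v. (\<lambda>x y. fapp \<phi> y * x z) u (hmul H (hanti H v) b))"
    by (rule integral_slide_left) (rule bilinI, simp_all add: algebra_simps)
  also have "\<dots> = frob H t (rtrans H \<phi> b) z"
    by (simp add: frob_def fapp_rtrans)
  finally show "hmul H b (frob H t \<phi>) z = frob H t (rtrans H \<phi> b) z" .
qed

end

context hopf_left_integral
begin

lemma frob_recover:
  "(\<Sum>i\<in>UNIV. sw H (frob H t (rtrans H \<phi> (hmul H (ev i) b))) (\<lambda>u v. u z * hanti H (hanti H v) i))
    = t z * fapp \<phi> b"
proof -
  let ?S2 = "\<lambda>v. hanti H (hanti H v)"
  let ?R = "sw H t (\<lambda>a c. sw H a (\<lambda>u v. u z * fapp \<phi> (hmul H (hanti H c) (hmul H (?S2 v) b))))"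
  have "?R = sw H t (\<lambda>u a'. sw H a' (\<lambda>v c. u z * fapp \<phi> (hmul H (hanti H (hmul H (hanti H v) c)) b)))"
    by (subst sw_coassoc) (simp add: anti_mult mul_assoc)
  also have "\<dots> = sw H t (\<lambda>u a'. hcounit H a' * (u z * fapp \<phi> (hmul H (hanti H (hone H)) b)))"
    by (rule sw_cong, rule sw_anti_l[where G = "\<lambda>w. _ * fapp \<phi> (hmul H (hanti H w) b)"])
      (simp add: islin_def algebra_simps)
  also have "\<dots> = t z * fapp \<phi> b"
    by (simp, rule sw_counit_r') (simp add: islin_def algebra_simps)
  finally have R: "?R = t z * fapp \<phi> b" .
  have "?R = sw H t (\<lambda>a c. sw H a (\<lambda>u v.
      \<Sum>i\<in>UNIV. (u z * ?S2 v i) * fapp \<phi> (hmul H (hanti H c) (hmul H (ev i) b))))"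
    by (intro sw_cong, subst islin_expand[of "\<lambda>w. fapp \<phi> (hmul H (hanti H _) (hmul H w b))"])
      (simp_all add: islin_def sum_distrib_left mult.assoc)
  also have "\<dots> = (\<Sum>i\<in>UNIV. sw H (frob H t (rtrans H \<phi> (hmul H (ev i) b))) (\<lambda>u v. u z * ?S2 v i))"
    unfolding sw_sum_fun by (rule sum.cong[OF refl]) (simp add: sw_frob fapp_rtrans sw_cmult2 mult.commute)
  finally show ?thesis using R by simp
qed

lemma frob_inj: assumes "t \<noteq> 0" shows "inj (frob H t)"
proof (rule additive_injI[OF frob_add frob_scale])
  fix \<phi> assume zero: "frob H t \<phi> = 0"
  have "frob H t (rtrans H \<phi> c) = 0" for c
    using frob_rtrans[of c \<phi>] zero by simp
  then have "t z * fapp \<phi> b = 0" for b z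
    using frob_recover[of \<phi> b z] by simp
  moreover obtain z where "t z \<noteq> 0" using assms by (auto simp: fun_eq_iff)
  ultimately show "\<phi> = 0"
    by (intro functional_eq_zero) (metis mult_eq_0_iff)
qed

lemma frob_surj: "t \<noteq> 0 \<Longrightarrow> surj (frob H t)"
  by (rule lin_inj_surj) (simp_all add: frob_add frob_scale frob_inj)

lemma left_integral_unique:
  assumes "t \<noteq> 0" and int': "\<And>a. hmul H a t' = vscale (hcounit H a) t'"
  shows "\<exists>c. t' = vscale c t"
proof -
  obtain \<phi> where t': "t' = frob H t \<phi>" using frob_surj[OF assms(1)] by (metis surj_def)
  have "frob H t (rtrans H \<phi> a) = frob H t (vscale (hcounit H a) \<phi>)" for a
    using frob_rtrans[of a \<phi>] int'[of a] by (simp add: frob_scale t')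
  then have "rtrans H \<phi> a = vscale (hcounit H a) \<phi>" for a
    using frob_inj[OF assms(1)] by (simp add: inj_eq)
  then have "fapp \<phi> (hmul H w a) = hcounit H a * fapp \<phi> w" for w a
    by (metis fapp_rtrans fapp_scale_left)
  moreover define c where "c = fapp \<phi> (hone H)"
  ultimately have \<phi>: "fapp \<phi> a = hcounit H a * c" for a
    by (metis one_left)
  have "t' z = sw H t (\<lambda>a b. hcounit H b * (c * a z))" for z
    by (simp add: t' frob_def \<phi> mult_ac)
  moreover have "sw H t (\<lambda>a b. hcounit H b * (c * a z)) = c * t z" for z
    by (rule sw_counit_r') (simp add: islin_def algebra_simps)
  ultimately have "t' z = c * t z" for z by simp
  then show ?thesis by (auto simp: fun_eq_iff)
qed

end

context hopf_left_integral
begin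

text \<open>Besides \<open>frob\<close> we use the two maps
  \<open>\<eta> \<mapsto> \<Sum> \<eta>(t\<^sub>2) t\<^sub>1\<close> and \<open>\<phi> \<mapsto> \<Sum> \<phi>(t\<^sub>1) t\<^sub>2\<close>, which are adjoint to each other; the first
  is onto since \<open>frob \<phi>\<close> is its value at \<open>\<phi> \<circ> S\<close>, so the second is injective and hence onto.
  Choosing \<open>\<phi>\<close> with \<open>\<Sum> \<phi>(t\<^sub>1) t\<^sub>2 = 1\<close>, sliding gives \<open>a = \<Sum> \<phi>(S(a) t\<^sub>1) t\<^sub>2\<close>, so \<open>S\<close> is
  injective.\<close>

definition int_right :: "('i \<Rightarrow> 'k) \<Rightarrow> ('i \<Rightarrow> 'k)" where
  "int_right \<eta> = (\<lambda>z. sw H t (\<lambda>a b. fapp \<eta> b * a z))"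

definition int_left :: "('i \<Rightarrow> 'k) \<Rightarrow> ('i \<Rightarrow> 'k)" where
  "int_left \<phi> = (\<lambda>z. sw H t (\<lambda>a b. fapp \<phi> a * b z))"

lemma int_right_surj: assumes "t \<noteq> 0" shows "surj int_right"
proof -
  have "frob H t \<phi> = int_right (\<lambda>i. fapp \<phi> (hanti H (ev i)))" for \<phi>
  proof -
    have S: "fapp \<phi> (hanti H b) = fapp (\<lambda>i. fapp \<phi> (hanti H (ev i))) b" for b
      by (rule islin_fapp) (simp add: islin_def)
    show ?thesis unfolding frob_def int_right_def by (intro ext sw_cong) (subst S, rule refl)
  qed
  then show ?thesis using frob_surj[OF assms] by (metis surj_def)
qed

lemma int_adjoint: "fapp \<phi> (int_right \<eta>) = fapp \<eta> (int_left \<phi>)"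
proof -
  have "fapp \<phi> (int_right \<eta>) = sw H t (\<lambda>a b. fapp \<phi> (vscale (fapp \<eta> b) a))"
    unfolding int_right_def using sw_vec[of "fapp \<phi>" H t "\<lambda>a b. vscale (fapp \<eta> b) a"]
    by (simp add: islin_def)
  moreover have "fapp \<eta> (int_left \<phi>) = sw H t (\<lambda>a b. fapp \<eta> (vscale (fapp \<phi> a) b))"
    unfolding int_left_def using sw_vec[of "fapp \<eta>" H t "\<lambda>a b. vscale (fapp \<phi> a) b"]
    by (simp add: islin_def)
  ultimately show ?thesis by (simp add: mult.commute)
qed

lemma int_left_surj: assumes "t \<noteq> 0" shows "surj int_left"
proof -
  have add: "int_left (x + y) = int_left x + int_left y" for x y
    by (rule ext) (simp add: int_left_def fapp_add_left algebra_simps sw_plus_fun)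
  have scale: "int_left (vscale c x) = vscale c (int_left x)" for c x
    by (rule ext) (simp add: int_left_def fapp_scale_left mult.assoc sw_cmult)
  have "inj int_left"
  proof (rule additive_injI[OF add scale])
    fix \<phi> assume zero: "int_left \<phi> = 0"
    show "\<phi> = 0"
    proof (rule ext)
      fix i
      obtain \<eta> where "ev i = int_right \<eta>" using int_right_surj[OF assms] by (metis surj_def)
      then have "\<phi> i = fapp \<eta> (int_left \<phi>)" by (metis fapp_ev int_adjoint)
      then show "\<phi> i = 0 i" using zero by (simp add: fapp_def)
    qed
  qed
  then show ?thesis by (rule lin_inj_surj[OF add scale])
qed

lemma anti_surj: assumes "t \<noteq> 0" shows "surj (hanti H)"
proof (rule lin_inj_surj)
  obtain \<phi> where unit: "int_left \<phi> = hone H" using int_left_surj[OF assms] by (metis surj_def)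
  show "inj (hanti H)"
  proof (rule additive_injI[OF hanti_add hanti_scale])
    fix a assume zero: "hanti H a = 0"
    show "a = 0"
    proof (rule ext)
      fix z
      have "a z = (\<lambda>w. hmul H a w z) (\<lambda>z. sw H t (\<lambda>u v. vscale (fapp \<phi> u) v z))"
        using unit by (simp add: int_left_def)
      also have "\<dots> = sw H t (\<lambda>u v. hmul H a (vscale (fapp \<phi> u) v) z)"
        by (rule sw_vec) (simp add: islin_def)
      also have "\<dots> = sw H t (\<lambda>u v. (\<lambda>x y. fapp \<phi> x * y z) u (hmul H a v))"
        by simp
      also have "\<dots> = sw H t (\<lambda>u v. (\<lambda>x y. fapp \<phi> x * y z) (hmul H (hanti H a) u) v)"
        by (rule integral_slide_right) (rule bilinI, simp_all add: algebra_simps)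
      also have "\<dots> = 0" using zero by (simp add: fapp_def)
      finally show "a z = 0 z" by simp
    qed
  qed
qed simp_all

end

section \<open>Convolution of functionals and inverses of grouplikes\<close>

lemma fapp_conv: "fapp (conv H \<phi> \<psi>) h = sw H h (\<lambda>a b. fapp \<phi> a * fapp \<psi> b)"
proof -
  have "fapp (conv H \<phi> \<psi>) h = (\<Sum>i\<in>UNIV. h i * (\<Sum>p\<in>UNIV. hc H i (fst p) (snd p) * \<phi> (fst p) * \<psi> (snd p)))"
    by (simp add: fapp_def conv_def mult.commute)
  also have "\<dots> = (\<Sum>p\<in>UNIV. (\<Sum>i\<in>UNIV. h i * hc H i (fst p) (snd p)) * (\<phi> (fst p) * \<psi> (snd p)))"
    by (simp add: sum_distrib_left sum_distrib_right mult_ac) (rule sum.swap)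
  also have "\<dots> = sw H h (\<lambda>a b. fapp \<phi> a * fapp \<psi> b)"
    by (simp add: sw_def hcomul_def case_prod_beta)
  finally show ?thesis .
qed

lemma fapp_he: "fapp (he H) w = hcounit H w"
  by (simp add: fapp_def hcounit_def mult.commute)

context hopf_alg
begin

lemma conv_assoc: "conv H (conv H \<phi> \<psi>) \<chi> = conv H \<phi> (conv H \<psi> \<chi>)"
proof (rule vec_eq_fapp)
  fix h
  have "fapp (conv H (conv H \<phi> \<psi>) \<chi>) h = sw H h (\<lambda>a b. sw H a (\<lambda>a1 a2. fapp \<phi> a1 * fapp \<psi> a2 * fapp \<chi> b))"
    by (simp add: fapp_conv sw_cmult2)
  also have "\<dots> = sw H h (\<lambda>a b. sw H b (\<lambda>b1 b2. fapp \<phi> a * fapp \<psi> b1 * fapp \<chi> b2))"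
    by (rule sw_coassoc)
  also have "\<dots> = fapp (conv H \<phi> (conv H \<psi> \<chi>)) h"
    by (simp add: fapp_conv sw_cmult mult.assoc)
  finally show "fapp (conv H (conv H \<phi> \<psi>) \<chi>) h = fapp (conv H \<phi> (conv H \<psi> \<chi>)) h" .
qed

lemma conv_unit_l: "conv H (he H) \<phi> = \<phi>"
  by (rule vec_eq_fapp) (simp add: fapp_conv fapp_he sw_counit_l islin_def)

lemma conv_unit_r: "conv H \<phi> (he H) = \<phi>"
  by (rule vec_eq_fapp) (simp add: fapp_conv fapp_he sw_counit_r islin_def)

definition anti_dual :: "('i \<Rightarrow> 'k) \<Rightarrow> ('i \<Rightarrow> 'k)" where
  "anti_dual g = (\<lambda>i. fapp g (hanti H (ev i)))"

lemma fapp_anti_dual: "fapp (anti_dual g) w = fapp g (hanti H w)"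
  unfolding anti_dual_def by (rule islin_fapp[symmetric]) (simp add: islin_def)

lemma conv_inv_grouplike: assumes g: "grouplike_dual H g"
  shows "conv H (anti_dual g) g = he H" and "conv_inv H g = anti_dual g"
proof -
  let ?gS = "anti_dual g"
  note gS = fapp_anti_dual
  have mult: "fapp g (hmul H u v) = fapp g u * fapp g v" and unit: "fapp g (hone H) = 1" for u v
    using g by (auto simp: grouplike_dual_def)
  show left: "conv H ?gS g = he H"
  proof (rule vec_eq_fapp)
    fix h
    have "fapp (conv H ?gS g) h = sw H h (\<lambda>a b. fapp g (hmul H (hanti H a) b))"
      by (simp add: fapp_conv gS mult)
    also have "\<dots> = hcounit H h"
      by (subst sw_anti_l) (simp_all add: islin_def unit)
    finally show "fapp (conv H ?gS g) h = fapp (he H) h" by (simp add: fapp_he)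
  qed
  have right: "conv H g ?gS = he H"
  proof (rule vec_eq_fapp)
    fix h
    have "fapp (conv H g ?gS) h = sw H h (\<lambda>a b. fapp g (hmul H a (hanti H b)))"
      by (simp add: fapp_conv gS mult)
    also have "\<dots> = hcounit H h"
      by (subst sw_anti_r) (simp_all add: islin_def unit)
    finally show "fapp (conv H g ?gS) h = fapp (he H) h" by (simp add: fapp_he)
  qed
  show "conv_inv H g = ?gS"
    unfolding conv_inv_def
  proof (rule the_equality)
    fix \<psi> assume "conv H \<psi> g = he H \<and> conv H g \<psi> = he H"
    then have inv: "conv H \<psi> g = he H" by simp
    have "\<psi> = conv H \<psi> (conv H g ?gS)" by (simp add: right conv_unit_r)
    also have "\<dots> = conv H (conv H \<psi> g) ?gS" by (simp add: conv_assoc)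
    finally show "\<psi> = ?gS" by (simp add: inv conv_unit_l)
  qed (simp add: left right)
qed

end

section \<open>Hopf algebras with a projection\<close>

locale hopf_projection =
  A: hopf_alg A + H: hopf_alg H
  for A :: "('a::finite, 'k::field) hopf_data" and H :: "('h::finite, 'k) hopf_data" +
  fixes P :: "'a \<Rightarrow> 'h \<Rightarrow> 'k" and J :: "'h \<Rightarrow> 'a \<Rightarrow> 'k"
  assumes mapP: "is_hopf_map A H P" and mapJ: "is_hopf_map H A J"
    and split: "\<forall>h. lin P (lin J h) = h"
begin

abbreviation "jmap \<equiv> lin J"
abbreviation "pmap \<equiv> lin P"
abbreviation "R \<equiv> coinv A H P"
abbreviation "act \<equiv> hact A H J"

lemma pj[simp]: "pmap (jmap h) = h"
  using split by simp
lemma jmul: "jmap (hmul H a b) = hmul A (jmap a) (jmap b)"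
  using mapJ by (simp add: is_hopf_map_def)
lemma pmul: "pmap (hmul A a b) = hmul H (pmap a) (pmap b)"
  using mapP by (simp add: is_hopf_map_def)
lemma jone[simp]: "jmap (hone H) = hone A"
  using mapJ by (simp add: is_hopf_map_def)
lemma jcounit[simp]: "hcounit A (jmap h) = hcounit H h"
  using mapJ by (simp add: is_hopf_map_def)
lemma pone[simp]: "pmap (hone A) = hone H"
  using mapP by (simp add: is_hopf_map_def)
lemma pcounit[simp]: "hcounit H (pmap a) = hcounit A a"
  using mapP by (simp add: is_hopf_map_def)

lemma hact_sw: "act h r = (\<lambda>m. sw H h (\<lambda>a b. hmul A (hmul A (jmap a) r) (jmap (hanti H b)) m))"
  by (simp add: hact_def sw_def)

lemma lin_act: "islin f \<Longrightarrow> f (act h r) = sw H h (\<lambda>a b. f (hmul A (hmul A (jmap a) r) (jmap (hanti H b))))"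
  unfolding hact_sw by (rule sw_vec)

lemma act_lin: "islin (\<lambda>h. act h r m)"
  by (simp add: hact_sw islin_def)

lemma act_scale: "act g (vscale c r) = vscale c (act g r)"
  by (rule ext) (simp add: hact_sw sw_cmult mult.left_commute)

lemma act_one: "act (hone H) r = r"
proof (rule ext)
  fix m
  have "act (hone H) r m = hmul A (hmul A (jmap (hone H)) r) (jmap (hanti H (hone H))) m"
    unfolding hact_sw by (rule H.sw_one) (rule bilinI, simp_all)
  then show "act (hone H) r m = r m" by simp
qed

lemma act_mult: "act (hmul H g h) r = act g (act h r)"
proof (rule ext)
  fix m
  let ?K = "\<lambda>a b. hmul A (hmul A (jmap a) r) (jmap (hanti H b))"
  have "act (hmul H g h) r m = sw H g (\<lambda>g1 g2. sw H h (\<lambda>h1 h2. ?K (hmul H g1 h1) (hmul H g2 h2) m))"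
    unfolding hact_sw by (rule H.sw_mult) (rule bilinI, simp_all)
  also have "\<dots> = sw H g (\<lambda>g1 g2. sw H h (\<lambda>h1 h2. hmul A (hmul A (jmap g1) (?K h1 h2)) (jmap (hanti H g2)) m))"
    by (simp add: jmul H.anti_mult A.mul_assoc)
  also have "\<dots> = sw H g (\<lambda>g1 g2. (\<lambda>w. hmul A (hmul A (jmap g1) w) (jmap (hanti H g2)) m) (act h r))"
    by (rule sw_cong, subst lin_act) (simp_all add: islin_def)
  also have "\<dots> = act g (act h r) m"
    by (simp add: hact_sw[of g])
  finally show "act (hmul H g h) r m = act g (act h r) m" .
qed

lemma act_counit: "hcounit A (act g r) = hcounit H g * hcounit A r"
proof -
  have "hcounit A (act g r) = sw H g (\<lambda>a b. hcounit H a * (hcounit A r * hcounit H b))"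
    by (subst lin_act) (simp_all add: islin_def A.counit_mult mult_ac)
  also have "\<dots> = hcounit A r * hcounit H g"
    by (rule H.sw_counit_l) (simp add: islin_def algebra_simps)
  finally show ?thesis by simp
qed

lemma jmap_commute: "hmul A (jmap h) r = (\<lambda>z. sw H h (\<lambda>a b. hmul A (act a r) (jmap b) z))"
proof (rule ext)
  fix z
  have "sw H h (\<lambda>a b. hmul A (act a r) (jmap b) z)
      = sw H h (\<lambda>a b. sw H a (\<lambda>a1 a2. hmul A (hmul A (hmul A (jmap a1) r) (jmap (hanti H a2))) (jmap b) z))"
    by (rule sw_cong, rule lin_act) (simp add: islin_def)
  also have "\<dots> = sw H h (\<lambda>a1 c. sw H c (\<lambda>a2 b. (\<lambda>w. hmul A (hmul A (jmap a1) r) (jmap w) z) (hmul H (hanti H a2) b)))"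
    by (simp only: H.sw_coassoc) (simp add: A.mul_assoc jmul)
  also have "\<dots> = sw H h (\<lambda>a1 c. hcounit H c * hmul A (hmul A (jmap a1) r) (jmap (hone H)) z)"
    by (rule sw_cong, rule H.sw_anti_l) (simp add: islin_def)
  also have "\<dots> = hmul A (jmap h) r z"
    by simp (rule H.sw_counit_r', simp add: islin_def)
  finally show "hmul A (jmap h) r z = sw H h (\<lambda>a b. hmul A (act a r) (jmap b) z)" by simp
qed

lemma coinv_commute: "hmul A r (jmap (hanti H g)) z = sw H g (\<lambda>u v. hmul A (jmap (hanti H u)) (act v r) z)"
proof -
  have "sw H g (\<lambda>u v. hmul A (jmap (hanti H u)) (act v r) z)
      = sw H g (\<lambda>u v. sw H v (\<lambda>v1 v2. hmul A (jmap (hanti H u)) (hmul A (hmul A (jmap v1) r) (jmap (hanti H v2))) z))"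
    by (rule sw_cong, rule lin_act) (simp add: islin_def)
  also have "\<dots> = sw H g (\<lambda>uv1 v2. sw H uv1 (\<lambda>u v1.
      (\<lambda>w. hmul A (hmul A (jmap w) r) (jmap (hanti H v2)) z) (hmul H (hanti H u) v1)))"
    by (subst H.sw_coassoc[symmetric]) (simp add: jmul A.mul_assoc)
  also have "\<dots> = sw H g (\<lambda>uv1 v2. hcounit H uv1 * hmul A (hmul A (jmap (hone H)) r) (jmap (hanti H v2)) z)"
    by (rule sw_cong, rule H.sw_anti_l) (simp add: islin_def)
  also have "\<dots> = hmul A r (jmap (hanti H g)) z"
    by simp (rule H.sw_counit_l, simp add: islin_def)
  finally show ?thesis by simp
qed

end

context hopf_projection
begin

lemma coaction_sandwich: assumes r: "r \<in> R" and F: "bilin F"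
  shows "sw A (hmul A (hmul A (jmap a) r) (jmap c)) (\<lambda>u w. F u (pmap w))
       = sw H a (\<lambda>a1 a2. sw H c (\<lambda>c1 c2. F (hmul A (hmul A (jmap a1) r) (jmap c1)) (hmul H a2 c2)))"
proof -
  note FD = bilinD[OF F]
  let ?G = "\<lambda>a1 a2 c2 w. sw H c (\<lambda>e f. F (hmul A (hmul A (jmap a1) c2) (jmap e)) (hmul H (hmul H a2 w) f))"
  have "sw A (hmul A (hmul A (jmap a) r) (jmap c)) (\<lambda>u w. F u (pmap w))
      = sw A (jmap a) (\<lambda>c1 d1. sw A r (\<lambda>c2 d2. sw A (jmap c) (\<lambda>e f.
          F (hmul A (hmul A c1 c2) e) (pmap (hmul A (hmul A d1 d2) f)))))"
    by (subst A.sw_mult, rule bilinI, simp_all add: FD, subst A.sw_mult)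
      (rule bilinI, simp_all add: FD sw_plus_fun sw_cmult)
  also have "\<dots> = sw H a (\<lambda>a1 a2. sw A r (\<lambda>c2 d2. sw H c (\<lambda>e f.
          F (hmul A (hmul A (jmap a1) c2) (jmap e)) (pmap (hmul A (hmul A (jmap a2) d2) (jmap f))))))"
    by (subst sw_hmap[OF mapJ], rule bilinI, simp_all add: FD sw_plus_fun sw_cmult)
      (intro sw_cong sw_hmap[OF mapJ], rule bilinI, simp_all add: FD)
  also have "\<dots> = sw H a (\<lambda>a1 a2. sw A r (\<lambda>c2 d2. ?G a1 a2 c2 (pmap d2)))"
    by (simp add: pmul)
  also have "\<dots> = sw H a (\<lambda>a1 a2. ?G a1 a2 r (hone H))"
    by (rule sw_cong, rule coinv_sw[OF r]) (simp add: bilin_def islin_def FD sw_plus_fun sw_cmult)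
  finally show ?thesis by simp
qed

lemma act_coinv: assumes r: "r \<in> R" shows "act g r \<in> R"
proof (rule coinvI)
  fix F :: "('a \<Rightarrow> 'k) \<Rightarrow> ('h \<Rightarrow> 'k) \<Rightarrow> 'k" assume F: "bilin F"
  note FD = bilinD[OF F]
  let ?K = "\<lambda>a b. hmul A (hmul A (jmap a) r) (jmap (hanti H b))"
  have "sw A (act g r) (\<lambda>u w. F u (pmap w))
      = sw H g (\<lambda>a b. sw H a (\<lambda>a1 a2. sw H (hanti H b) (\<lambda>c1 c2. F (hmul A (hmul A (jmap a1) r) (jmap c1)) (hmul H a2 c2))))"
    by (subst lin_act) (simp_all add: islin_sw coaction_sandwich[OF r F])
  also have "\<dots> = sw H g (\<lambda>a b. sw H a (\<lambda>a1 a2. sw H b (\<lambda>b1 b2. F (?K a1 b2) (hmul H a2 (hanti H b1)))))"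
    by (intro sw_cong H.anti_comult) (rule bilinI, simp_all add: FD)
  also have "\<dots> = sw H g (\<lambda>a1 x. sw H x (\<lambda>a2b1 b2. sw H a2b1 (\<lambda>a2 b1. F (?K a1 b2) (hmul H a2 (hanti H b1)))))"
    by (subst H.sw_coassoc) (rule sw_cong, rule H.sw_coassoc[symmetric])
  also have "\<dots> = sw H g (\<lambda>a1 x. sw H x (\<lambda>a2b1 b2. hcounit H a2b1 * F (?K a1 b2) (hone H)))"
    by (intro sw_cong) (rule H.sw_anti_r[where G = "F _"], simp add: islin_def FD)
  also have "\<dots> = sw H g (\<lambda>a b. F (?K a b) (hone H))"
    by (intro sw_cong) (rule H.sw_counit_l, simp add: islin_def FD)
  also have "\<dots> = F (act g r) (hone H)"
    by (subst lin_act) (simp_all add: islin_def FD)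
  finally show "sw A (act g r) (\<lambda>u w. F u (pmap w)) = F (act g r) (hone H)" .
qed

end

context hopf_projection
begin

definition coinv_proj :: "('a \<Rightarrow> 'k) \<Rightarrow> ('a \<Rightarrow> 'k)" where
  "coinv_proj a = (\<lambda>z. sw A a (\<lambda>u v. hmul A u (jmap (pmap (hanti A v))) z))"

lemma coaction_twist: assumes F: "bilin F"
  shows "sw A (hmul A u (jmap (pmap (hanti A v)))) (\<lambda>c d. F c (pmap d))
    = sw A u (\<lambda>u1 u2. sw A v (\<lambda>v1 v2. F (hmul A u1 (jmap (pmap (hanti A v2)))) (hmul H (pmap u2) (pmap (hanti A v1)))))"
proof -
  note FD = bilinD[OF F]
  have "sw A (hmul A u (jmap (pmap (hanti A v)))) (\<lambda>c d. F c (pmap d))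
      = sw A u (\<lambda>u1 u2. sw A (jmap (pmap (hanti A v))) (\<lambda>e f. F (hmul A u1 e) (pmap (hmul A u2 f))))"
    by (rule A.sw_mult) (simp add: bilin_def islin_def FD sw_plus_fun sw_cmult)
  also have "\<dots> = sw A u (\<lambda>u1 u2. sw H (pmap (hanti A v)) (\<lambda>e f. F (hmul A u1 (jmap e)) (pmap (hmul A u2 (jmap f)))))"
    by (intro sw_cong sw_hmap[OF mapJ]) (simp add: bilin_def islin_def FD)
  also have "\<dots> = sw A u (\<lambda>u1 u2. sw A (hanti A v) (\<lambda>e f. F (hmul A u1 (jmap (pmap e))) (pmap (hmul A u2 (jmap (pmap f))))))"
    by (intro sw_cong sw_hmap[OF mapP]) (simp add: bilin_def islin_def FD)
  also have "\<dots> = sw A u (\<lambda>u1 u2. sw A v (\<lambda>v1 v2. F (hmul A u1 (jmap (pmap (hanti A v2)))) (pmap (hmul A u2 (jmap (pmap (hanti A v1)))))))"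
    by (intro sw_cong A.anti_comult) (simp add: bilin_def islin_def FD)
  finally show ?thesis by (simp add: pmul)
qed

lemma coinv_proj_coinv: "coinv_proj a \<in> R"
proof (rule coinvI)
  fix F :: "('a \<Rightarrow> 'k) \<Rightarrow> ('h \<Rightarrow> 'k) \<Rightarrow> 'k" assume F: "bilin F"
  note FD = bilinD[OF F]
  let ?K = "\<lambda>u v. hmul A u (jmap (pmap (hanti A v)))"
  have "sw A (coinv_proj a) (\<lambda>c d. F c (pmap d)) = sw A a (\<lambda>u v. sw A (?K u v) (\<lambda>c d. F c (pmap d)))"
    unfolding coinv_proj_def by (rule sw_vec) (rule islin_sw)
  also have "\<dots> = sw A a (\<lambda>u1 x'. sw A x' (\<lambda>u2 v. sw A v (\<lambda>v1 v2. F (?K u1 v2) (hmul H (pmap u2) (pmap (hanti A v1))))))"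
    by (simp add: coaction_twist[OF F] A.sw_coassoc)
  also have "\<dots> = sw A a (\<lambda>u1 x'. sw A x' (\<lambda>u2v1 v2. sw A u2v1 (\<lambda>u2 v1. (\<lambda>w. F (?K u1 v2) (pmap w)) (hmul A u2 (hanti A v1)))))"
    by (simp only: pmul) (rule sw_cong, rule A.sw_coassoc[symmetric])
  also have "\<dots> = sw A a (\<lambda>u1 x'. sw A x' (\<lambda>u2v1 v2. hcounit A u2v1 * F (?K u1 v2) (hone H)))"
    by (intro sw_cong, subst A.sw_anti_r) (simp_all add: islin_def FD)
  also have "\<dots> = sw A a (\<lambda>u1 x'. F (?K u1 x') (hone H))"
    by (intro sw_cong A.sw_counit_l) (simp add: islin_def FD)
  also have "\<dots> = F (coinv_proj a) (hone H)"
    unfolding coinv_proj_def by (rule sw_vec[symmetric]) (simp add: islin_def FD)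
  finally show "sw A (coinv_proj a) (\<lambda>c d. F c (pmap d)) = F (coinv_proj a) (hone H)" .
qed

lemma coinv_proj_counit: "hcounit A (coinv_proj a) = hcounit A a"
proof -
  have "hcounit A (coinv_proj a) = sw A a (\<lambda>u v. hcounit A u * hcounit A v)"
    unfolding coinv_proj_def
    by (subst sw_vec) (simp_all add: islin_def A.counit_mult)
  also have "\<dots> = hcounit A a"
    by (rule A.sw_counit_r) (simp add: islin_def)
  finally show ?thesis .
qed

end

context hopf_alg
begin

definition gtwist :: "('i \<Rightarrow> 'k) \<Rightarrow> ('i \<Rightarrow> 'k) \<Rightarrow> ('i \<Rightarrow> 'k)" where
  "gtwist g h = (\<lambda>z. sw H h (\<lambda>a b. fapp g a * b z))"

lemma sw_gtwist: "sw H (gtwist g h) G = sw H h (\<lambda>a b. fapp g a * sw H b G)"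
proof -
  have "sw H (gtwist g h) G = (\<lambda>w. sw H w G) (\<lambda>z. sw H h (\<lambda>a b. vscale (fapp g a) b z))"
    by (simp add: gtwist_def)
  also have "\<dots> = sw H h (\<lambda>a b. sw H (vscale (fapp g a) b) G)"
    by (rule sw_vec) (rule islin_sw)
  finally show ?thesis by simp
qed

lemma gtwist_inverse: assumes g: "grouplike_dual H g" shows "gtwist (anti_dual g) (gtwist g h) = h"
proof (rule ext)
  fix z
  have mult: "fapp g (hmul H u v) = fapp g u * fapp g v" and unit: "fapp g (hone H) = 1" for u v
    using g by (auto simp: grouplike_dual_def)
  have "gtwist (anti_dual g) (gtwist g h) z = sw H h (\<lambda>a b. fapp g a * sw H b (\<lambda>b1 b2. fapp g (hanti H b1) * b2 z))"
    by (simp add: gtwist_def[of "anti_dual g"] fapp_anti_dual sw_gtwist)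
  also have "\<dots> = sw H h (\<lambda>a b. sw H b (\<lambda>b1 b2. (\<lambda>w. fapp g w * b2 z) (hmul H a (hanti H b1))))"
    by (simp add: mult sw_cmult[symmetric] mult_ac)
  also have "\<dots> = sw H h (\<lambda>ab1 b2. sw H ab1 (\<lambda>a b1. (\<lambda>w. fapp g w * b2 z) (hmul H a (hanti H b1))))"
    by (rule sw_coassoc[symmetric])
  also have "\<dots> = sw H h (\<lambda>ab1 b2. hcounit H ab1 * b2 z)"
    by (intro sw_cong, subst sw_anti_r) (simp_all add: islin_def unit algebra_simps)
  also have "\<dots> = h z"
    by (rule sw_counit_l) (simp add: islin_def)
  finally show "gtwist (anti_dual g) (gtwist g h) z = h z" .
qed

end

context hopf_projection
begin

text \<open>For \<open>r \<in> R\<close>, the product \<open>r j(h)\<close> determines \<open>r \<otimes> h\<close>: applying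
  \<open>u \<otimes> v \<mapsto> \<Sum> u j(S p(v)\<^sub>1) \<otimes> p(v)\<^sub>2\<close> to \<open>\<Delta>(r j(h))\<close> gives back \<open>r \<otimes> h\<close>.\<close>
lemma coinv_jmap_recover: assumes r: "r \<in> R"
  shows "sw A (hmul A r (jmap h)) (\<lambda>u v. sw H (pmap v) (\<lambda>w1 w2. hmul A u (jmap (hanti H w1)) z * fapp \<phi> w2))
    = r z * fapp \<phi> h"
proof -
  define F where "F = (\<lambda>(u::'a\<Rightarrow>'k) (w::'h\<Rightarrow>'k). sw H w (\<lambda>w1 w2. hmul A u (jmap (hanti H w1)) z * fapp \<phi> w2))"
  have F: "bilin F" unfolding F_def by (simp add: bilin_def islin_def algebra_simps sw_plus_fun sw_cmult)
  note FD = bilinD[OF F]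
  have "sw A (hmul A r (jmap h)) (\<lambda>u v. F u (pmap v)) = sw A r (\<lambda>r1 r2. sw H h (\<lambda>c d. F (hmul A r1 (jmap c)) (hmul H (pmap r2) d)))"
    by (subst A.sw_mult, simp add: bilin_def islin_def FD sw_plus_fun sw_cmult)
      (intro sw_cong, subst sw_hmap[OF mapJ], simp_all add: bilin_def islin_def FD pmul)
  also have "\<dots> = sw H h (\<lambda>c d. F (hmul A r (jmap c)) d)"
    by (subst sw_swap, intro sw_cong, subst coinv_sw[OF r, where F = "\<lambda>u w. F (hmul A u (jmap _)) (hmul H w _)"])
      (simp_all add: bilin_def islin_def FD)
  also have "\<dots> = sw H h (\<lambda>cd1 d2. sw H cd1 (\<lambda>c d1. (\<lambda>w. hmul A r (jmap w) z * fapp \<phi> d2) (hmul H c (hanti H d1))))"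
    unfolding F_def by (subst H.sw_coassoc[symmetric]) (simp add: A.mul_assoc jmul)
  also have "\<dots> = sw H h (\<lambda>cd1 d2. hcounit H cd1 * (r z * fapp \<phi> d2))"
    by (intro sw_cong, subst H.sw_anti_r) (simp_all add: islin_def algebra_simps)
  also have "\<dots> = r z * fapp \<phi> h"
    by (rule H.sw_counit_l) (simp add: islin_def algebra_simps)
  finally show ?thesis by (simp add: F_def)
qed

lemma coinv_jmap_zero: assumes "r \<in> R" "r \<noteq> 0" "hmul A r (jmap h) = 0" shows "h = 0"
proof -
  have "r z * fapp \<phi> h = 0" for z \<phi>
    using coinv_jmap_recover[OF assms(1), of h z \<phi>] assms(3) by simp
  moreover obtain z where "r z \<noteq> 0" using assms(2) by (auto simp: fun_eq_iff)
  ultimately show "h = 0" by (metis mult_eq_0_iff vec_eq_zero_fapp)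
qed

end

section \<open>The left integral \<open>j(\<Lambda>) x\<close> of \<open>A\<close>\<close>

locale biproduct_integrals = hopf_projection A H P J
  for A :: "('a::finite, 'k::field) hopf_data" and H :: "('h::finite, 'k) hopf_data"
    and P :: "'a \<Rightarrow> 'h \<Rightarrow> 'k" and J :: "'h \<Rightarrow> 'a \<Rightarrow> 'k" +
  fixes x :: "'a \<Rightarrow> 'k" and \<Lambda> :: "'h \<Rightarrow> 'k"
  assumes x_coinv: "x \<in> R" and x_integral: "\<And>r. r \<in> R \<Longrightarrow> hmul A r x = vscale (hcounit A r) x"
    and \<Lambda>_integral: "\<And>a. hmul H a \<Lambda> = vscale (hcounit H a) \<Lambda>" and \<Lambda>_nonzero: "\<Lambda> \<noteq> 0"
begin

sublocale H\<Lambda>: hopf_left_integral H \<Lambda>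
  by unfold_locales (rule \<Lambda>_integral)

text \<open>Writing
  \<open>h = S g\<close> (the antipode is onto) and commuting, this reduces to \<open>(g\<^sub>2 \<cdot> r) x = \<epsilon>(g\<^sub>2) \<epsilon>(r) x\<close>.\<close>
lemma coinv_absorbed: assumes r: "r \<in> R"
  shows "hmul A (hmul A r (jmap h)) x = vscale (hcounit A r) (hmul A (jmap h) x)"
proof -
  obtain g where g: "h = hanti H g" using H\<Lambda>.anti_surj[OF \<Lambda>_nonzero] by (metis surj_def)
  have act_x: "hmul A (act v r) x = vscale (hcounit H v * hcounit A r) x" for v
    using x_integral[OF act_coinv[OF r]] by (simp add: act_counit)
  have "hmul A (hmul A r (jmap (hanti H g))) x z = hcounit A r * hmul A (jmap (hanti H g)) x z" for z
  proof -
    have "hmul A (hmul A r (jmap (hanti H g))) x z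
        = (\<lambda>w. hmul A w x z) (\<lambda>z'. sw H g (\<lambda>u v. hmul A (jmap (hanti H u)) (act v r) z'))"
      by (simp add: coinv_commute[symmetric])
    also have "\<dots> = sw H g (\<lambda>u v. hcounit H v * (hcounit A r * hmul A (jmap (hanti H u)) x z))"
      by (subst sw_vec) (simp_all add: islin_def A.mul_assoc act_x mult_ac)
    also have "\<dots> = hcounit A r * hmul A (jmap (hanti H g)) x z"
      by (rule H.sw_counit_r') (simp add: islin_def algebra_simps)
    finally show ?thesis .
  qed
  then show ?thesis by (auto simp: g fun_eq_iff)
qed

lemma act_x_integral: "is_left_integral_in A R (act h x)"
  unfolding is_left_integral_in_def
proof (intro conjI ballI)
  show "act h x \<in> R" by (rule act_coinv[OF x_coinv])
  fix r assume r: "r \<in> R"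
  show "hmul A r (act h x) = vscale (hcounit A r) (act h x)"
  proof (rule ext)
    fix z
    have "hmul A r (act h x) z = sw H h (\<lambda>a b. hmul A (hmul A (hmul A r (jmap a)) x) (jmap (hanti H b)) z)"
      by (subst lin_act) (simp_all add: islin_def A.mul_assoc)
    also have "\<dots> = vscale (hcounit A r) (act h x) z"
      by (simp add: coinv_absorbed[OF r] hact_sw sw_cmult)
    finally show "hmul A r (act h x) z = vscale (hcounit A r) (act h x) z" .
  qed
qed

end

context biproduct_integrals
begin

abbreviation "t\<^sub>0 \<equiv> hmul A (jmap \<Lambda>) x"

text \<open>On \<open>j(\<Lambda>) x\<close>, left multiplication by \<open>a\<close> agrees with left multiplication by \<open>E(a)\<close>,
  since \<open>j(p(S a\<^sub>2)) j(\<Lambda>) = \<epsilon>(a\<^sub>2) j(\<Lambda>)\<close>.\<close>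
lemma coinv_proj_mul: "hmul A a t\<^sub>0 = hmul A (coinv_proj a) t\<^sub>0"
proof (rule ext)
  fix z
  have absorb: "hmul A (hmul A u (jmap (pmap (hanti A v)))) t\<^sub>0 = vscale (hcounit A v) (hmul A u t\<^sub>0)" for u v
  proof -
    have "hmul A (hmul A u (jmap (pmap (hanti A v)))) t\<^sub>0 = hmul A u (hmul A (jmap (hmul H (pmap (hanti A v)) \<Lambda>)) x)"
      by (simp add: A.mul_assoc jmul)
    then show ?thesis by (simp add: \<Lambda>_integral)
  qed
  have "hmul A (coinv_proj a) t\<^sub>0 z = sw A a (\<lambda>u v. hcounit A v * hmul A u t\<^sub>0 z)"
    unfolding coinv_proj_def by (subst sw_vec) (simp_all add: islin_def absorb)
  also have "\<dots> = hmul A a t\<^sub>0 z"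
    by (rule A.sw_counit_r') (simp add: islin_def)
  finally show "hmul A a t\<^sub>0 z = hmul A (coinv_proj a) t\<^sub>0 z" by simp
qed

text \<open>Part (1), integral property: \<open>a j(\<Lambda>) x = E(a) j(\<Lambda>) x = \<epsilon>(E a) j(\<Lambda>) x = \<epsilon>(a) j(\<Lambda>) x\<close>.\<close>
lemma t0_integral: "hmul A a t\<^sub>0 = vscale (hcounit A a) t\<^sub>0"
proof -
  have "hmul A a t\<^sub>0 = hmul A (hmul A (coinv_proj a) (jmap \<Lambda>)) x"
    by (subst coinv_proj_mul) (simp add: A.mul_assoc)
  also have "\<dots> = vscale (hcounit A a) t\<^sub>0"
    by (simp add: coinv_absorbed[OF coinv_proj_coinv] coinv_proj_counit)
  finally show ?thesis .
qed

end

section \<open>The character \<open>\<gamma>\<close> and nonvanishing of \<open>j(\<Lambda>) x\<close>\<close>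

locale biproduct_integrals_unique = biproduct_integrals A H P J x \<Lambda>
  for A :: "('a::finite, 'k::field) hopf_data" and H :: "('h::finite, 'k) hopf_data"
    and P :: "'a \<Rightarrow> 'h \<Rightarrow> 'k" and J :: "'h \<Rightarrow> 'a \<Rightarrow> 'k" and x :: "'a \<Rightarrow> 'k" and \<Lambda> :: "'h \<Rightarrow> 'k" +
  assumes x_nonzero: "x \<noteq> 0"
    and x_unique: "\<forall>y. is_left_integral_in A R y \<longrightarrow> (\<exists>c. y = vscale c x)"
begin

definition \<gamma> :: "'h \<Rightarrow> 'k" where
  "\<gamma> = (\<lambda>i. SOME c. act (ev i) x = vscale c x)"

lemma \<gamma>_act: "act h x = vscale (fapp \<gamma> h) x"
  unfolding \<gamma>_def by (rule linear_multiple[OF act_lin]) (use x_unique act_x_integral in blast)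

text \<open>\<open>\<gamma>\<close> is an algebra map because the action is an algebra action and \<open>x \<noteq> 0\<close>.\<close>
lemma \<gamma>_grouplike: "grouplike_dual H \<gamma>"
  unfolding grouplike_dual_def
proof (intro conjI allI)
  fix g h
  have "vscale (fapp \<gamma> (hmul H g h)) x = vscale (fapp \<gamma> g * fapp \<gamma> h) x"
    by (simp add: \<gamma>_act[symmetric] act_mult) (simp add: \<gamma>_act act_scale fun_eq_iff mult_ac)
  then show "fapp \<gamma> (hmul H g h) = fapp \<gamma> g * fapp \<gamma> h" by (rule vscale_cancel[OF x_nonzero])
next
  have "vscale (fapp \<gamma> (hone H)) x = vscale 1 x"
    by (simp add: \<gamma>_act[symmetric] act_one) (simp add: fun_eq_iff)
  then show "fapp \<gamma> (hone H) = 1" by (rule vscale_cancel[OF x_nonzero])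
qed

lemma jmap_x: "hmul A (jmap h) x = hmul A x (jmap (H.gtwist \<gamma> h))"
proof (rule ext)
  fix z
  have "hmul A (jmap h) x z = sw H h (\<lambda>a b. hmul A x (jmap (vscale (fapp \<gamma> a) b)) z)"
    by (subst jmap_commute) (simp add: \<gamma>_act)
  also have "\<dots> = (\<lambda>w. hmul A x (jmap w) z) (\<lambda>z. sw H h (\<lambda>a b. vscale (fapp \<gamma> a) b z))"
    by (rule sw_vec[symmetric]) (simp add: islin_def)
  also have "\<dots> = hmul A x (jmap (H.gtwist \<gamma> h)) z"
    by (simp add: H.gtwist_def)
  finally show "hmul A (jmap h) x z = hmul A x (jmap (H.gtwist \<gamma> h)) z" .
qed

text \<open>Part (1), nonvanishing: \<open>j(\<Lambda>) x = x j(\<Sum> \<gamma>(\<Lambda>\<^sub>1) \<Lambda>\<^sub>2)\<close>, and the twist is invertible.\<close>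
lemma t0_nonzero: "t\<^sub>0 \<noteq> 0"
proof
  assume "t\<^sub>0 = 0"
  then have "H.gtwist \<gamma> \<Lambda> = 0"
    using coinv_jmap_zero[OF x_coinv x_nonzero] jmap_x by simp
  then have "\<Lambda> = H.gtwist (H.anti_dual \<gamma>) 0"
    using H.gtwist_inverse[OF \<gamma>_grouplike, of \<Lambda>] by simp
  also have "\<dots> = 0" by (rule ext) (simp add: H.gtwist_def)
  finally show False using \<Lambda>_nonzero by simp
qed

sublocale At\<^sub>0: hopf_left_integral A t\<^sub>0
  by unfold_locales (rule t0_integral)

end

section \<open>The distinguished grouplike element of \<open>A\<close>\<close>

context biproduct_integrals_unique
begin

definition \<beta> :: "'h \<Rightarrow> 'k" where
  "\<beta> = (\<lambda>i. SOME c. hmul A t\<^sub>0 (jmap (ev i)) = vscale c t\<^sub>0)"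

lemma \<beta>_act: "hmul A t\<^sub>0 (jmap h) = vscale (fapp \<beta> h) t\<^sub>0"
  unfolding \<beta>_def
proof (rule linear_multiple)
  show "islin (\<lambda>h. hmul A t\<^sub>0 (jmap h) z)" for z by (simp add: islin_def)
  show "\<exists>c. hmul A t\<^sub>0 (jmap h) = vscale c t\<^sub>0" for h
    by (rule At\<^sub>0.left_integral_unique[OF t0_nonzero]) (subst A.mul_assoc[symmetric], simp add: t0_integral)
qed

text \<open>Comparing the two expansions of \<open>j(\<Lambda>) j(h) x = \<Sum> j(\<Lambda>) (h\<^sub>1 \<cdot> x) j(h\<^sub>2)\<close> gives
  \<open>\<gamma> * \<beta> = \<alpha>\<^sub>H\<close> in the convolution algebra \<open>H\<^sup>*\<close>.\<close>
lemma conv_\<gamma>_\<beta>: assumes \<alpha>H: "\<And>h. hmul H \<Lambda> h = vscale (fapp \<alpha>H h) \<Lambda>"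
  shows "conv H \<gamma> \<beta> = \<alpha>H"
proof (rule vec_eq_fapp)
  fix h
  have "hmul A (jmap \<Lambda>) (hmul A (jmap h) x) = vscale (fapp (conv H \<gamma> \<beta>) h) t\<^sub>0"
  proof (rule ext)
    fix z
    have "hmul A (jmap \<Lambda>) (hmul A (jmap h) x) z = sw H h (\<lambda>a b. hmul A (hmul A (jmap \<Lambda>) (act a x)) (jmap b) z)"
      by (subst jmap_commute, subst sw_vec) (simp_all add: islin_def A.mul_assoc)
    also have "\<dots> = fapp (conv H \<gamma> \<beta>) h * t\<^sub>0 z"
      by (simp add: \<gamma>_act \<beta>_act fapp_conv mult.assoc flip: sw_cmult2)
    finally show "hmul A (jmap \<Lambda>) (hmul A (jmap h) x) z = vscale (fapp (conv H \<gamma> \<beta>) h) t\<^sub>0 z" by simp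
  qed
  moreover have "hmul A (jmap \<Lambda>) (hmul A (jmap h) x) = vscale (fapp \<alpha>H h) t\<^sub>0"
    by (simp add: A.mul_assoc[symmetric] jmul[symmetric] \<alpha>H)
  ultimately show "fapp (conv H \<gamma> \<beta>) h = fapp \<alpha>H h"
    by (intro vscale_cancel[OF t0_nonzero]) simp
qed

lemma distinguished_grouplike:
  assumes \<alpha>R: "\<forall>r\<in>R. hmul A x r = vscale (fapp \<alpha>R r) x"
    and \<alpha>H: "\<And>h. hmul H \<Lambda> h = vscale (fapp \<alpha>H h) \<Lambda>"
    and t: "is_left_integral A t" and r: "r \<in> R"
  shows "hmul A t (hmul A r (jmap h)) = vscale (fapp \<alpha>R r * fapp (conv H (conv_inv H \<gamma>) \<alpha>H) h) t"
proof -
  obtain c where c: "t = vscale c t\<^sub>0"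
    using At\<^sub>0.left_integral_unique[OF t0_nonzero] t by (auto simp: is_left_integral_def is_left_integral_in_def)
  have "conv H (conv_inv H \<gamma>) \<alpha>H = conv H (conv H (H.anti_dual \<gamma>) \<gamma>) \<beta>"
    by (simp add: H.conv_inv_grouplike(2)[OF \<gamma>_grouplike] H.conv_assoc conv_\<gamma>_\<beta>[OF \<alpha>H])
  also have "\<dots> = \<beta>"
    by (simp add: H.conv_inv_grouplike(1)[OF \<gamma>_grouplike] H.conv_unit_l)
  finally have \<beta>_eq: "conv H (conv_inv H \<gamma>) \<alpha>H = \<beta>" .
  have "hmul A t\<^sub>0 (hmul A r (jmap h)) = hmul A (jmap \<Lambda>) (hmul A (hmul A x r) (jmap h))"
    by (simp add: A.mul_assoc)
  also have "\<dots> = vscale (fapp \<alpha>R r) (hmul A t\<^sub>0 (jmap h))"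
    using \<alpha>R r by (simp add: A.mul_assoc)
  also have "\<dots> = vscale (fapp \<alpha>R r * fapp \<beta> h) t\<^sub>0"
    by (simp add: \<beta>_act fun_eq_iff mult.assoc)
  finally show ?thesis by (simp add: c \<beta>_eq fun_eq_iff mult_ac)
qed

end

theorem mainTheorem7:
  fixes A :: "('a::finite, 'k::field) hopf_data"
    and H :: "('h::finite, 'k) hopf_data"
    and P :: "'a \<Rightarrow> 'h \<Rightarrow> 'k" and J :: "'h \<Rightarrow> 'a \<Rightarrow> 'k"
    and x :: "'a \<Rightarrow> 'k" and \<alpha>R :: "'a \<Rightarrow> 'k"
    and \<Lambda> :: "'h \<Rightarrow> 'k" and \<alpha>H :: "'h \<Rightarrow> 'k"
  assumes hopfA: "is_hopf A" and hopfH: "is_hopf H"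
    and mapP: "is_hopf_map A H P" and mapJ: "is_hopf_map H A J"
    and split: "\<forall>h. lin P (lin J h) = h"
    and xint: "is_left_integral_in A (coinv A H P) x" and xnz: "x \<noteq> vzero"
    and xuniq: "\<forall>y. is_left_integral_in A (coinv A H P) y \<longrightarrow> (\<exists>c. y = vscale c x)"
    and \<alpha>R: "\<forall>r\<in>coinv A H P. hmul A x r = vscale (fapp \<alpha>R r) x"
    and \<Lambda>int: "is_left_integral H \<Lambda>" and \<Lambda>nz: "\<Lambda> \<noteq> vzero"
    and \<alpha>Hg: "grouplike_dual H \<alpha>H"
    and \<alpha>H: "\<forall>h. hmul H \<Lambda> h = vscale (fapp \<alpha>H h) \<Lambda>"
  shows "is_left_integral A (hmul A (lin J \<Lambda>) x) \<and> hmul A (lin J \<Lambda>) x \<noteq> vzero \<and>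
    (\<exists>\<gamma>. grouplike_dual H \<gamma> \<and>
       (\<forall>h. hact A H J h x = vscale (fapp \<gamma> h) x) \<and>
       (\<forall>t. is_left_integral A t \<and> t \<noteq> vzero \<longrightarrow>
          (\<forall>r\<in>coinv A H P. \<forall>h.
             hmul A t (hmul A r (lin J h)) =
               vscale (fapp \<alpha>R r * fapp (conv H (conv_inv H \<gamma>) \<alpha>H) h) t)))"
proof -
  interpret biproduct_integrals_unique A H P J x \<Lambda>
  proof unfold_locales
    show "x \<in> coinv A H P" and "\<And>r. r \<in> coinv A H P \<Longrightarrow> hmul A r x = vscale (hcounit A r) x"
      using xint by (auto simp: is_left_integral_in_def)
    show "\<And>a. hmul H a \<Lambda> = vscale (hcounit H a) \<Lambda>"
      using \<Lambda>int by (simp add: is_left_integral_def is_left_integral_in_def)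
  qed (use assms in \<open>simp_all add: vzero_eq\<close>)
  have "is_left_integral A t\<^sub>0"
    by (simp add: is_left_integral_def is_left_integral_in_def t0_integral)
  moreover have "\<forall>t. is_left_integral A t \<and> t \<noteq> vzero \<longrightarrow> (\<forall>r\<in>R. \<forall>h.
      hmul A t (hmul A r (jmap h)) = vscale (fapp \<alpha>R r * fapp (conv H (conv_inv H \<gamma>) \<alpha>H) h) t)"
    using distinguished_grouplike[OF \<alpha>R] \<alpha>H by blast
  ultimately show ?thesis
    using t0_nonzero \<gamma>_grouplike \<gamma>_act by (auto simp: vzero_eq)
qed

end
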